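(* Let $Y$ be a complex Banach space, $U:\mathcal B(\mathcal H)\to Y$ a non-null bounded linear operator with $\|U\|<\lambda$, $1\le p<\infty$, and $Z=(\mathbb C^n,\|\cdot\|)$ a Banach space whose canonical basis is normalized $1$-unconditional. Then for every $n$, $$\frac{R_\lambda(\mathbb D,p,U)}{n}\le AP_\lambda(B_Z,p,U)\le\|Id:Z\to\ell_1^n\|\frac{R_\lambda(\mathbb D,p,U)}{n^{1/p}}.$$
   Context: $\mathcal B(\mathcal H)$: bounded operators on a complex Hilbert space; $\mathbb D$ the open unit disc. For a simply connected complete Reinhardt domain $\Omega\subset\mathbb C^k$, bounded pluriharmonic $f:\Omega\to\mathcal B(\mathcal H)$ are written $f(z)=\sum_\alpha a_\alpha z^\alpha+\sum_{|\alpha|\ge1}b_\alpha^*\bar z^\alpha$ ($b_0=0$), $\|f\|_\Omega=\sup\|f(z)\|$. $R_\lambda(\Omega,p,U)$: supremum of $r\ge0$ with $\sup_{z\in r\Omega}\sum_\alpha(\|U(a_\alpha)\|^p+\|U(b_\alpha)\|^p)|z^\alpha|^p\le\lambda^p\|f\|_\Omega^p$ for all such $f$. $AP_\lambda(\Omega,p,U)$: supremum of $\frac1k\sum_{i=1}^kr_i$ over $r\in\mathbb R^k_{\ge0}$ with $\sum_\alpha(\|U(a_\alpha)\|^p+\|U(b_\alpha)\|^p)r^{p\alpha}\le\lambda^p\|f\|_\Omega^p$ for all such $f$. $B_Z$ open unit ball of $Z$. *)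

theory Defs
  imports "HOL-Analysis.Analysis"
begin

(* A complex Hilbert space H is modelled as a real Hilbert space 'h with an orthogonal
   complex structure J (multiplication by i): J o J = -id, <Jx,Jy> = <x,y>.
   Then <x,y>_C = <x,y> + i <x,Jy> makes 'h a complex Hilbert space, and every complex
   Hilbert space arises this way. *)
definition hilbert_cstruct :: "('h::{real_inner,complete_space} \<Rightarrow>\<^sub>L 'h) \<Rightarrow> bool" where
  "hilbert_cstruct J \<longleftrightarrow> J o\<^sub>L J = - id_blinfun \<and> (\<forall>x y. inner (J x) (J y) = inner x y)"

(* B(H): bounded complex-linear operators = bounded real-linear operators commuting with J *)
definition Bop :: "('h::real_normed_vector \<Rightarrow>\<^sub>L 'h) \<Rightarrow> ('h \<Rightarrow>\<^sub>L 'h) set" where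
  "Bop J = {T. T o\<^sub>L J = J o\<^sub>L T}"

definition cscale :: "('h::real_normed_vector \<Rightarrow>\<^sub>L 'h) \<Rightarrow> complex \<Rightarrow> ('h \<Rightarrow>\<^sub>L 'h) \<Rightarrow> ('h \<Rightarrow>\<^sub>L 'h)" where
  "cscale J c T = Re c *\<^sub>R T + Im c *\<^sub>R (J o\<^sub>L T)"

(* Hilbert-space adjoint (for J-commuting operators the real and complex adjoints agree) *)
definition hadj :: "('h::{real_inner,complete_space} \<Rightarrow>\<^sub>L 'h) \<Rightarrow> ('h \<Rightarrow>\<^sub>L 'h)" where
  "hadj T = (THE S :: 'h \<Rightarrow>\<^sub>L 'h. \<forall>x y. inner (T x) y = inner x (S y))"

(* A complex Banach space Y is a real Banach space 'y with a complex structure Jy such that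
   c*y := Re c * y + Im c * Jy y satisfies ||c y|| = |c| ||y|| *)
definition banach_cstruct :: "('y::banach \<Rightarrow> 'y) \<Rightarrow> bool" where
  "banach_cstruct Jy \<longleftrightarrow> linear Jy \<and> (\<forall>x. Jy (Jy x) = - x) \<and>
     (\<forall>c x. norm (Re c *\<^sub>R x + Im c *\<^sub>R Jy x) = cmod c * norm x)"

definition cscaleY :: "('y::real_normed_vector \<Rightarrow> 'y) \<Rightarrow> complex \<Rightarrow> 'y \<Rightarrow> 'y" where
  "cscaleY Jy c y = Re c *\<^sub>R y + Im c *\<^sub>R Jy y"

definition bounded_clinear_U ::
  "('h::{real_inner,complete_space} \<Rightarrow>\<^sub>L 'h) \<Rightarrow> ('y::banach \<Rightarrow> 'y) \<Rightarrow> (('h \<Rightarrow>\<^sub>L 'h) \<Rightarrow> 'y) \<Rightarrow> bool" where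
  "bounded_clinear_U J Jy U \<longleftrightarrow>
     (\<forall>S\<in>Bop J. \<forall>T\<in>Bop J. U (S + T) = U S + U T) \<and>
     (\<forall>c. \<forall>T\<in>Bop J. U (cscale J c T) = cscaleY Jy c (U T)) \<and>
     (\<exists>K. \<forall>T\<in>Bop J. norm (U T) \<le> K * norm T)"

definition opnorm_U :: "('h::{real_inner,complete_space} \<Rightarrow>\<^sub>L 'h) \<Rightarrow> (('h \<Rightarrow>\<^sub>L 'h) \<Rightarrow> 'y::banach) \<Rightarrow> real" where
  "opnorm_U J U = Sup {norm (U T) | T. T \<in> Bop J \<and> norm T \<le> 1}"

definition monom :: "complex ^ 'k::finite \<Rightarrow> ('k \<Rightarrow> nat) \<Rightarrow> complex" where
  "monom z \<alpha> = (\<Prod>i\<in>UNIV. (z $ i) ^ \<alpha> i)"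

definition rmonom :: "real ^ 'k::finite \<Rightarrow> ('k \<Rightarrow> nat) \<Rightarrow> real" where
  "rmonom r \<alpha> = (\<Prod>i\<in>UNIV. (r $ i) ^ \<alpha> i)"

definition ph_rep ::
  "('h::{real_inner,complete_space} \<Rightarrow>\<^sub>L 'h) \<Rightarrow> (complex ^ 'k::finite) set \<Rightarrow>
   (complex ^ 'k \<Rightarrow> ('h \<Rightarrow>\<^sub>L 'h)) \<Rightarrow> (('k \<Rightarrow> nat) \<Rightarrow> ('h \<Rightarrow>\<^sub>L 'h)) \<Rightarrow>
   (('k \<Rightarrow> nat) \<Rightarrow> ('h \<Rightarrow>\<^sub>L 'h)) \<Rightarrow> bool" where
  "ph_rep J \<Omega> f a b \<longleftrightarrow>
     (\<forall>\<alpha>. a \<alpha> \<in> Bop J \<and> b \<alpha> \<in> Bop J) \<and> b (\<lambda>_. 0) = 0 \<and>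
     (\<forall>z\<in>\<Omega>. (\<lambda>\<alpha>. cscale J (monom z \<alpha>) (a \<alpha>)) summable_on UNIV \<and>
              (\<lambda>\<alpha>. cscale J (cnj (monom z \<alpha>)) (hadj (b \<alpha>))) summable_on UNIV \<and>
              f z = (\<Sum>\<^sub>\<infinity>\<alpha>. cscale J (monom z \<alpha>) (a \<alpha>))
                  + (\<Sum>\<^sub>\<infinity>\<alpha>. cscale J (cnj (monom z \<alpha>)) (hadj (b \<alpha>))))"

definition supnorm :: "(complex ^ 'k::finite) set \<Rightarrow> (complex ^ 'k \<Rightarrow> 'a::real_normed_vector) \<Rightarrow> real" where
  "supnorm \<Omega> f = (SUP z\<in>\<Omega>. norm (f z))"

(* the extended-real sum of nonnegative terms t is <= B *)
definition nnsum_le :: "('i \<Rightarrow> real) \<Rightarrow> real \<Rightarrow> bool" where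
  "nnsum_le t B \<longleftrightarrow> t summable_on UNIV \<and> (\<Sum>\<^sub>\<infinity>i. t i) \<le> B"

definition Rlam ::
  "('h::{real_inner,complete_space} \<Rightarrow>\<^sub>L 'h) \<Rightarrow> (('h \<Rightarrow>\<^sub>L 'h) \<Rightarrow> 'y::banach) \<Rightarrow> real \<Rightarrow>
   (complex ^ 'k::finite) set \<Rightarrow> real \<Rightarrow> real" where
  "Rlam J U lam \<Omega> p = Sup {r. r \<ge> 0 \<and>
     (\<forall>f a b. ph_rep J \<Omega> f a b \<and> bounded (f ` \<Omega>) \<longrightarrow>
        (\<forall>z\<in>(\<lambda>w. r *\<^sub>R w) ` \<Omega>.
           nnsum_le (\<lambda>\<alpha>. (norm (U (a \<alpha>)) powr p + norm (U (b \<alpha>)) powr p) * cmod (monom z \<alpha>) powr p)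
                    (lam powr p * supnorm \<Omega> f powr p)))}"

definition APlam ::
  "('h::{real_inner,complete_space} \<Rightarrow>\<^sub>L 'h) \<Rightarrow> (('h \<Rightarrow>\<^sub>L 'h) \<Rightarrow> 'y::banach) \<Rightarrow> real \<Rightarrow>
   (complex ^ 'k::finite) set \<Rightarrow> real \<Rightarrow> real" where
  "APlam J U lam \<Omega> p = Sup {(\<Sum>i\<in>UNIV. r $ i) / real CARD('k) | r :: real ^ 'k.
     (\<forall>i. r $ i \<ge> 0) \<and>
     (\<forall>f a b. ph_rep J \<Omega> f a b \<and> bounded (f ` \<Omega>) \<longrightarrow>
        nnsum_le (\<lambda>\<alpha>. (norm (U (a \<alpha>)) powr p + norm (U (b \<alpha>)) powr p) * rmonom r \<alpha> powr p)
                 (lam powr p * supnorm \<Omega> f powr p))}"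

definition unit_disc1 :: "(complex ^ 1) set" where
  "unit_disc1 = {z. cmod (z $ 1) < 1}"

definition is_cnorm :: "(complex ^ 'n::finite \<Rightarrow> real) \<Rightarrow> bool" where
  "is_cnorm N \<longleftrightarrow> (\<forall>x y. N (x + y) \<le> N x + N y) \<and> (\<forall>c x. N (c *s x) = cmod c * N x) \<and>
                  (\<forall>x. N x = 0 \<longrightarrow> x = 0)"

definition normalized_1_unconditional :: "(complex ^ 'n::finite \<Rightarrow> real) \<Rightarrow> bool" where
  "normalized_1_unconditional N \<longleftrightarrow> (\<forall>i. N (axis i 1) = 1) \<and>
     (\<forall>x \<theta>. (\<forall>i. cmod (\<theta> $ i) \<le> 1) \<longrightarrow> N (\<chi> i. \<theta> $ i * x $ i) \<le> N x)"

definition id_to_l1_norm :: "(complex ^ 'n::finite \<Rightarrow> real) \<Rightarrow> real" where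
  "id_to_l1_norm N = Sup {(\<Sum>i\<in>UNIV. cmod (z $ i)) | z. N z \<le> 1}"

definition unit_ball_N :: "(complex ^ 'n::finite \<Rightarrow> real) \<Rightarrow> (complex ^ 'n) set" where
  "unit_ball_N N = {z. N z < 1}"

end

theory Submission
  imports Defs
begin

text \<open>
  Lower bound: restricting a function on \<open>B\<^sub>Z\<close> to a coordinate axis gives a function on the
  disc with the same coefficients along that axis, because \<open>\<parallel>v e\<^sub>i\<parallel> = \<bar>v\<bar>\<close> for a normalized
  basis. Hence every radius \<open>x < R\<^sub>\<lambda>(\<D>, p, U)\<close> yields the admissible point \<open>x e\<^sub>i\<close>, whose
  coordinate mean is \<open>x / n\<close>.

  Upper bound: with \<open>c = \<parallel>Id : Z \<rightarrow> \<ell>\<^sub>1\<^sup>n\<parallel>\<close>, the linear form \<open>z \<mapsto> (z\<^sub>1 + \<dots> + z\<^sub>n) / c\<close> maps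
  \<open>B\<^sub>Z\<close> into the disc. Composing a function \<open>g\<close> on the disc with it and expanding by the
  multinomial theorem gives a function on \<open>B\<^sub>Z\<close> with sup norm at most that of \<open>g\<close> and with
  coefficients \<open>(|\<alpha>|! / \<alpha>!) c\<^sup>-\<^sup>|\<^sup>\<alpha>\<^sup>| a\<^sub>|\<^sub>\<alpha>\<^sub>|\<close>, resp. \<open>b\<^sub>|\<^sub>\<alpha>\<^sub>|\<close>. If \<open>r\<close> is admissible for \<open>B\<^sub>Z\<close>, then
  \<open>m \<le> m\<^sup>p\<close> for the multinomial coefficients, the multinomial theorem read backwards and the
  power mean inequality \<open>\<Sum> r\<^sub>i\<^sup>p \<ge> n (\<Sum> r\<^sub>i / n)\<^sup>p\<close> show that the degree-\<open>k\<close> part of the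
  coefficient sum of the composed function dominates \<open>\<rho>\<^sup>p\<^sup>k (\<parallel>U a\<^sub>k\<parallel>\<^sup>p + \<parallel>U b\<^sub>k\<parallel>\<^sup>p)\<close> for
  \<open>\<rho> = n\<^sup>1\<^sup>/\<^sup>p (\<Sum> r\<^sub>i / n) / c\<close>; so \<open>\<rho>\<close> is an admissible radius for the disc.

  Both suprema are finite: testing with a monomial \<open>z\<^sup>\<alpha> T\<close>, \<open>U T \<noteq> 0\<close>, bounds every admissible
  coordinate by \<open>\<lambda> \<parallel>T\<parallel> / \<parallel>U T\<parallel>\<close>.
\<close>

lemma hilbert_cstruct_J_J:
  assumes "hilbert_cstruct J" shows "J (J y) = - y"
proof -
  have "(J o\<^sub>L J) y = (- id_blinfun) y" using assms unfolding hilbert_cstruct_def by simp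
  then show ?thesis by (simp add: uminus_blinfun.rep_eq)
qed

lemma hilbert_cstruct_inner:
  assumes "hilbert_cstruct J" shows "inner (J x) (J y) = inner x y"
  using assms unfolding hilbert_cstruct_def by simp

lemma hilbert_cstruct_orthogonal:
  assumes "hilbert_cstruct J" shows "inner y (J y) = 0"
proof -
  have "inner (J y) (J (J y)) = inner y (J y)" using hilbert_cstruct_inner[OF assms] by simp
  then have "inner (J y) (- y) = inner y (J y)" using hilbert_cstruct_J_J[OF assms] by simp
  then show ?thesis by (simp add: inner_commute)
qed

lemma hilbert_cstruct_norm_scale:
  assumes "hilbert_cstruct J"
  shows "norm (Re c *\<^sub>R y + Im c *\<^sub>R J y) = cmod c * norm y"
proof -
  let ?a = "Re c" and ?b = "Im c"
  have JJ: "inner (J y) (J y) = inner y y" by (rule hilbert_cstruct_inner[OF assms])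
  have orth: "inner y (J y) = 0" "inner (J y) y = 0"
    using hilbert_cstruct_orthogonal[OF assms, of y] by (simp_all add: inner_commute)
  have "(norm (?a *\<^sub>R y + ?b *\<^sub>R J y))\<^sup>2
      = ?a * ?a * inner y y + ?a * ?b * inner y (J y) + ?b * ?a * inner (J y) y + ?b * ?b * inner (J y) (J y)"
    unfolding power2_norm_eq_inner
    by (simp only: inner_add_left inner_add_right inner_scaleR_left inner_scaleR_right) (simp add: algebra_simps)
  also have "\<dots> = (?a * ?a + ?b * ?b) * inner y y" using JJ orth by (simp add: algebra_simps)
  also have "\<dots> = (cmod c * norm y)\<^sup>2"
    by (simp add: cmod_def power2_norm_eq_inner[symmetric] power_mult_distrib power2_eq_square)
  finally show ?thesis by (simp add: power2_eq_iff_nonneg)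
qed

lemma cscale_apply: "cscale J c T x = Re c *\<^sub>R T x + Im c *\<^sub>R J (T x)"
  unfolding cscale_def by (simp add: plus_blinfun.rep_eq scaleR_blinfun.rep_eq)

lemma cscale_mult:
  assumes "hilbert_cstruct J" shows "cscale J c (cscale J d T) = cscale J (c * d) T"
  by (rule blinfun_eqI)
     (simp add: cscale_apply blinfun.add_right blinfun.scaleR_right hilbert_cstruct_J_J[OF assms] algebra_simps)

lemma cscale_one [simp]: "cscale J 1 T = T"
  unfolding cscale_def by simp

lemma cscale_zero_left [simp]: "cscale J 0 T = 0"
  unfolding cscale_def by simp

lemma cscale_zero_right [simp]: "cscale J c 0 = 0"
  unfolding cscale_def by (simp add: blinfun_eqI)

lemma cscale_of_real: "cscale J (complex_of_real t) T = t *\<^sub>R T"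
  unfolding cscale_def by simp

lemma cscale_scaleR: "cscale J c (t *\<^sub>R T) = cscale J (complex_of_real t * c) T"
  by (rule blinfun_eqI) (simp add: cscale_apply scaleR_blinfun.rep_eq blinfun.scaleR_right mult.commute)

lemma cscale_sum_left: "cscale J (\<Sum>i\<in>A. c i) T = (\<Sum>i\<in>A. cscale J (c i) T)"
  unfolding cscale_def by (simp add: Re_sum Im_sum scaleR_sum_left sum.distrib)

lemma norm_cscale:
  assumes "hilbert_cstruct J"
  shows "norm (cscale J c T) = cmod c * norm T"
proof -
  have le: "norm (cscale J c T) \<le> cmod c * norm T" for c T
  proof (rule norm_blinfun_bound)
    fix x
    have "norm (cscale J c T x) = cmod c * norm (T x)"
      unfolding cscale_apply by (rule hilbert_cstruct_norm_scale[OF assms])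
    also have "\<dots> \<le> cmod c * (norm T * norm x)"
      by (intro mult_left_mono norm_blinfun) auto
    finally show "norm (cscale J c T x) \<le> cmod c * norm T * norm x" by simp
  qed simp
  show ?thesis
  proof (cases "c = 0")
    case False
    have "norm T = norm (cscale J (inverse c) (cscale J c T))"
      using False by (simp add: cscale_mult[OF assms])
    also have "\<dots> \<le> norm (cscale J c T) / cmod c"
      using le[of "inverse c" "cscale J c T"] by (simp add: norm_inverse divide_inverse mult.commute)
    finally have "cmod c * norm T \<le> norm (cscale J c T)"
      using False by (simp add: field_simps)
    with le[of c T] show ?thesis by simp
  qed (simp add: cscale_def)
qed

lemma Bop_zero [simp]: "0 \<in> Bop J"
  unfolding Bop_def by (auto intro: blinfun_eqI simp: blinfun.zero_right)

lemma Bop_scaleR: "T \<in> Bop J \<Longrightarrow> t *\<^sub>R T \<in> Bop J"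
  unfolding Bop_def
proof clarsimp
  assume "T o\<^sub>L J = J o\<^sub>L T"
  then have "\<And>x. T (J x) = J (T x)" by (metis blinfun_apply_blinfun_compose)
  then show "(t *\<^sub>R T) o\<^sub>L J = J o\<^sub>L (t *\<^sub>R T)"
    by (intro blinfun_eqI) (simp add: scaleR_blinfun.rep_eq blinfun.scaleR_right)
qed

lemma bounded_clinear_U_add:
  "bounded_clinear_U J Jy U \<Longrightarrow> S \<in> Bop J \<Longrightarrow> T \<in> Bop J \<Longrightarrow> U (S + T) = U S + U T"
  unfolding bounded_clinear_U_def by blast

lemma bounded_clinear_U_zero: "bounded_clinear_U J Jy U \<Longrightarrow> U 0 = 0"
  using bounded_clinear_U_add[of J Jy U 0 0] by simp

lemma bounded_clinear_U_scaleR: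
  assumes "bounded_clinear_U J Jy U" "T \<in> Bop J"
  shows "U (t *\<^sub>R T) = t *\<^sub>R U T"
proof -
  have "U (cscale J (complex_of_real t) T) = cscaleY Jy (complex_of_real t) (U T)"
    using assms unfolding bounded_clinear_U_def by blast
  then show ?thesis by (simp add: cscale_of_real cscaleY_def)
qed

lemma norm_U_le_opnorm_U:
  assumes U: "bounded_clinear_U J Jy U" and T: "T \<in> Bop J"
  shows "norm (U T) \<le> opnorm_U J U * norm T"
proof (cases "T = 0")
  case True then show ?thesis using bounded_clinear_U_zero[OF U] by simp
next
  case False
  obtain K where K: "\<forall>T\<in>Bop J. norm (U T) \<le> K * norm T"
    using U unfolding bounded_clinear_U_def by blast
  let ?S = "{norm (U T) | T. T \<in> Bop J \<and> norm T \<le> 1}"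
  have bdd: "bdd_above ?S"
  proof (rule bdd_aboveI[of _ "\<bar>K\<bar>"])
    fix x assume "x \<in> ?S"
    then obtain T where T: "x = norm (U T)" "T \<in> Bop J" "norm T \<le> 1" by blast
    have "K * norm T \<le> \<bar>K\<bar> * 1" using T(3) by (intro mult_mono) auto
    then show "x \<le> \<bar>K\<bar>" using K T by fastforce
  qed
  let ?T = "(1 / norm T) *\<^sub>R T"
  have "?T \<in> Bop J" "norm ?T \<le> 1" using Bop_scaleR[OF T] False by simp_all
  then have "norm (U ?T) \<in> ?S" by blast
  then have "norm (U ?T) \<le> opnorm_U J U" unfolding opnorm_U_def using bdd by (rule cSup_upper)
  then show ?thesis using False by (simp add: bounded_clinear_U_scaleR[OF U T] field_simps)
qed

lemma opnorm_U_pos: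
  assumes "bounded_clinear_U J Jy U" "T \<in> Bop J" "U T \<noteq> 0"
  shows "0 < opnorm_U J U"
proof -
  have "0 < norm (U T)" using assms by simp
  also have "\<dots> \<le> opnorm_U J U * norm T" by (rule norm_U_le_opnorm_U[OF assms(1,2)])
  finally show ?thesis by (simp add: zero_less_mult_iff)
qed

section \<open>Riesz representation and adjoints\<close>

lemma minimizing_sequence_Cauchy:
  fixes X :: "nat \<Rightarrow> 'a::real_inner"
  assumes mid: "\<And>m n. 2 * d \<le> norm (X m + X n)" and d: "0 \<le> d"
    and X: "\<And>n. norm (X n) < d + 1 / real (Suc n)"
  shows "Cauchy X"
proof -
  define e where "e n = 1 / real (Suc n)" for n
  have e: "0 < e n" "e n \<le> 1" for n unfolding e_def by (auto simp: field_simps)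
  have para: "(norm (X n - X m))\<^sup>2 \<le> (4 * d + 2) * (e n + e m)" for n m
  proof -
    have "(2 * d)\<^sup>2 \<le> (norm (X n + X m))\<^sup>2" using mid d by (intro power_mono) auto
    then have A: "4 * d\<^sup>2 \<le> (norm (X n + X m))\<^sup>2" by (simp add: power_mult_distrib)
    have pl: "(norm (X n - X m))\<^sup>2 + (norm (X n + X m))\<^sup>2 = 2 * (norm (X n))\<^sup>2 + 2 * (norm (X m))\<^sup>2"
      unfolding power2_norm_eq_inner by (simp add: inner_diff inner_add inner_commute algebra_simps)
    have Bn: "(norm (X n))\<^sup>2 \<le> (d + e n)\<^sup>2" and Bm: "(norm (X m))\<^sup>2 \<le> (d + e m)\<^sup>2"
      using X[of n] X[of m] unfolding e_def by (auto intro!: power_mono)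
    have "(norm (X n - X m))\<^sup>2 \<le> 2 * (d + e n)\<^sup>2 + 2 * (d + e m)\<^sup>2 - 4 * d\<^sup>2"
      using pl A Bn Bm by linarith
    also have "\<dots> = 4 * d * (e n + e m) + 2 * (e n * e n) + 2 * (e m * e m)"
      by (simp add: power2_eq_square algebra_simps)
    also have "\<dots> \<le> 4 * d * (e n + e m) + 2 * e n + 2 * e m"
      using e[of n] e[of m] by (intro add_mono) (auto simp: mult_le_cancel_left1)
    finally show ?thesis by (simp add: algebra_simps)
  qed
  show "Cauchy X"
    unfolding Cauchy_def
  proof (intro allI impI)
    fix \<epsilon> :: real assume "\<epsilon> > 0"
    obtain M :: nat where M: "real M > 2 * (4 * d + 2) / \<epsilon>\<^sup>2"
      using reals_Archimedean2 by blast
    have "dist (X m) (X n) < \<epsilon>" if mn: "m \<ge> M" "n \<ge> M" for m n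
    proof -
      have eM: "e k \<le> 1 / real (Suc M)" if "k \<ge> M" for k
        unfolding e_def using that by (intro divide_left_mono) auto
      have "(dist (X m) (X n))\<^sup>2 \<le> (4 * d + 2) * (e m + e n)"
        using para[of m n] by (simp add: dist_norm)
      also have "\<dots> \<le> (4 * d + 2) * (2 / real (Suc M))"
        using eM[OF mn(1)] eM[OF mn(2)] d by (intro mult_left_mono) auto
      also have "\<dots> < \<epsilon>\<^sup>2"
      proof -
        have "2 * (4 * d + 2) / \<epsilon>\<^sup>2 < real (Suc M)" using M by simp
        then have "2 * (4 * d + 2) < real (Suc M) * \<epsilon>\<^sup>2"
          using \<open>\<epsilon> > 0\<close> by (simp add: divide_less_eq)
        then show ?thesis by (simp add: field_simps)
      qed
      finally show ?thesis
        using \<open>\<epsilon> > 0\<close> by (simp add: power_less_imp_less_base)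
    qed
    then show "\<exists>M. \<forall>m\<ge>M. \<forall>n\<ge>M. dist (X m) (X n) < \<epsilon>" by blast
  qed
qed

lemma bounded_linear_level_set_min_norm:
  fixes \<phi> :: "'a::{real_inner,complete_space} \<Rightarrow> real"
  assumes "bounded_linear \<phi>" and x1: "\<phi> x1 \<noteq> 0"
  shows "\<exists>u. \<phi> u = 1 \<and> (\<forall>x. \<phi> x = 1 \<longrightarrow> norm u \<le> norm x)"
proof -
  interpret \<phi>: bounded_linear \<phi> by fact
  define M where "M = {x. \<phi> x = 1}"
  have x1M: "(1 / \<phi> x1) *\<^sub>R x1 \<in> M" using x1 by (simp add: M_def \<phi>.scaleR)
  define d where "d = Inf (norm ` M)"
  have d_le: "d \<le> norm y" if "y \<in> M" for y
    unfolding d_def using that by (intro cInf_lower bdd_belowI[of _ 0]) auto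
  have d0: "0 \<le> d" unfolding d_def using x1M by (intro cInf_greatest) auto
  have "\<exists>x\<in>M. norm x < d + 1 / real (Suc n)" for n
    using cInf_lessD[of "norm ` M" "d + 1 / real (Suc n)"] x1M unfolding d_def by auto
  then obtain X where XM: "\<And>n. X n \<in> M" and Xd: "\<And>n. norm (X n) < d + 1 / real (Suc n)"
    by metis
  have "2 * d \<le> norm (X m + X n)" for m n
  proof -
    have "(1/2) *\<^sub>R (X m + X n) \<in> M"
      using XM[of m] XM[of n] by (simp add: M_def \<phi>.scaleR \<phi>.add)
    from d_le[OF this] show ?thesis by simp
  qed
  from minimizing_sequence_Cauchy[OF this d0 Xd] obtain u where lim: "X \<longlonglongrightarrow> u"
    using Cauchy_convergent convergent_def by blast
  have "(\<lambda>n. \<phi> (X n)) \<longlonglongrightarrow> \<phi> u" by (intro \<phi>.tendsto lim)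
  moreover have "(\<lambda>n. \<phi> (X n)) = (\<lambda>n. 1)" using XM by (auto simp: M_def)
  ultimately have u1: "\<phi> u = 1" using LIMSEQ_unique[OF _ tendsto_const] by metis
  have ud: "norm u \<le> d"
  proof (rule LIMSEQ_le)
    show "(\<lambda>n. norm (X n)) \<longlonglongrightarrow> norm u" by (intro tendsto_norm lim)
    show "(\<lambda>n. d + 1 / real (Suc n)) \<longlonglongrightarrow> d"
      using tendsto_add[OF tendsto_const LIMSEQ_inverse_real_of_nat, of d]
      by (simp add: inverse_eq_divide)
    show "\<exists>N. \<forall>n\<ge>N. norm (X n) \<le> d + 1 / real (Suc n)" using Xd less_imp_le by blast
  qed
  show ?thesis
  proof (intro exI conjI allI impI)
    fix x assume "\<phi> x = 1"
    then show "norm u \<le> norm x" using ud d_le[of x] unfolding M_def by simp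
  qed (fact u1)
qed

lemma riesz_representation:
  fixes \<phi> :: "'a::{real_inner,complete_space} \<Rightarrow> real"
  assumes bl: "bounded_linear \<phi>"
  shows "\<exists>u. \<forall>x. \<phi> x = inner x u"
proof (cases "\<forall>x. \<phi> x = 0")
  case True then show ?thesis by (intro exI[of _ 0]) simp
next
  case False
  interpret \<phi>: bounded_linear \<phi> by (rule bl)
  obtain u0 where u0: "\<phi> u0 = 1" and min: "\<And>x. \<phi> x = 1 \<Longrightarrow> norm u0 \<le> norm x"
    using bounded_linear_level_set_min_norm[OF bl] False by blast
  \<comment> \<open>\<open>u0\<close> minimises the norm on \<open>u0 + ker \<phi>\<close>, so it is orthogonal to \<open>ker \<phi>\<close>\<close>
  have orth: "inner u0 h = 0" if "\<phi> h = 0" for h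
  proof -
    define a where "a = inner u0 h"
    define H where "H = inner h h"
    have H0: "0 \<le> H" unfolding H_def by simp
    define s where "s = - a / (H + 1)"
    have "norm u0 \<le> norm (u0 + s *\<^sub>R h)" using u0 that by (intro min) (simp add: \<phi>.add \<phi>.scaleR)
    then have "(norm u0)\<^sup>2 \<le> (norm (u0 + s *\<^sub>R h))\<^sup>2" by (intro power_mono) auto
    then have "0 \<le> 2 * s * a + s * s * H"
      unfolding power2_norm_eq_inner a_def H_def by (simp add: inner_add inner_commute algebra_simps)
    then have "0 \<le> (2 * s * a + s * s * H) * (H + 1)\<^sup>2" by simp
    also have "(2 * s * a + s * s * H) * (H + 1)\<^sup>2 = -(a\<^sup>2) * (H + 2)"
    proof -
      have "s * (H + 1) = - a" unfolding s_def using H0 by simp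
      moreover have "(2 * s * a + s * s * H) * (H + 1)\<^sup>2
          = 2 * (s * (H + 1)) * a * (H + 1) + (s * (H + 1)) * (s * (H + 1)) * H"
        by (simp add: power2_eq_square algebra_simps)
      ultimately show ?thesis by (simp add: power2_eq_square algebra_simps)
    qed
    finally have "a\<^sup>2 * (H + 2) \<le> 0" by simp
    moreover have "0 \<le> a\<^sup>2 * (H + 2)" using H0 by simp
    ultimately have "a\<^sup>2 * (H + 2) = 0" by linarith
    then show ?thesis using H0 unfolding a_def by simp
  qed
  have "\<phi> x = inner x ((1 / inner u0 u0) *\<^sub>R u0)" for x
  proof -
    have "\<phi> (x - \<phi> x *\<^sub>R u0) = 0" using u0 by (simp add: \<phi>.diff \<phi>.scaleR)
    then have "inner u0 (x - \<phi> x *\<^sub>R u0) = 0" by (rule orth)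
    then have "inner u0 x = \<phi> x * inner u0 u0" by (simp add: inner_diff_right)
    moreover have "u0 \<noteq> 0" using u0 by auto
    ultimately show ?thesis by (simp add: inner_commute)
  qed
  then show ?thesis by blast
qed

lemma blinfun_adjoint_exists:
  fixes T :: "'a::{real_inner,complete_space} \<Rightarrow>\<^sub>L 'a"
  shows "\<exists>S :: 'a \<Rightarrow>\<^sub>L 'a. \<forall>x y. inner (T x) y = inner x (S y)"
proof -
  have "\<exists>u. \<forall>x. inner (T x) y = inner x u" for y
    by (intro riesz_representation bounded_linear_compose[OF bounded_linear_inner_left]
        blinfun.bounded_linear_right)
  then obtain S where S: "\<And>x y. inner (T x) y = inner x (S y)" by metis
  have uniq: "u = v" if "\<And>x. inner x u = inner x v" for u v :: 'a
  proof -
    have "inner (u - v) (u - v) = 0" using that by (simp add: inner_diff)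
    then show ?thesis by simp
  qed
  have add: "S (y1 + y2) = S y1 + S y2" for y1 y2
    by (rule uniq) (simp add: S[symmetric] inner_add_right)
  have scale: "S (r *\<^sub>R y) = r *\<^sub>R S y" for r y
    by (rule uniq) (simp add: S[symmetric])
  have bnd: "norm (S y) \<le> norm y * norm T" for y
  proof -
    have "(norm (S y))\<^sup>2 = inner (T (S y)) y" by (simp add: S power2_norm_eq_inner)
    also have "\<dots> \<le> norm (T (S y)) * norm y" by (rule order_trans[OF _ Cauchy_Schwarz_ineq2]) simp
    also have "\<dots> \<le> norm T * norm (S y) * norm y" by (intro mult_right_mono norm_blinfun) auto
    finally have "norm (S y) * norm (S y) \<le> (norm y * norm T) * norm (S y)"
      by (simp add: power2_eq_square algebra_simps)
    then show ?thesis by (cases "norm (S y) = 0") (auto simp: mult_le_cancel_right)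
  qed
  have "bounded_linear S"
    by (intro bounded_linear_intro[where K="norm T"] add scale bnd)
  then show ?thesis by (intro exI[of _ "Blinfun S"]) (simp add: bounded_linear_Blinfun_apply S)
qed

lemma hadj_unique:
  fixes T S :: "'a::{real_inner,complete_space} \<Rightarrow>\<^sub>L 'a"
  assumes "\<forall>x y. inner (T x) y = inner x (S y)"
  shows "hadj T = S"
  unfolding hadj_def
proof (rule the_equality)
  fix S' :: "'a \<Rightarrow>\<^sub>L 'a" assume S': "\<forall>x y. inner (T x) y = inner x (S' y)"
  show "S' = S"
  proof (rule blinfun_eqI)
    fix y
    have "inner (S' y - S y) (S' y - S y) = 0"
      using S' assms by (simp add: inner_diff inner_commute[of "S' y - S y"])
    then show "S' y = S y" by simp
  qed
qed (rule assms)

lemma hadj_scaleR: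
  fixes T :: "'a::{real_inner,complete_space} \<Rightarrow>\<^sub>L 'a"
  shows "hadj (t *\<^sub>R T) = t *\<^sub>R hadj T"
proof -
  obtain S :: "'a \<Rightarrow>\<^sub>L 'a" where S: "\<forall>x y. inner (T x) y = inner x (S y)"
    using blinfun_adjoint_exists by blast
  have "hadj (t *\<^sub>R T) = t *\<^sub>R S" by (rule hadj_unique) (simp add: S scaleR_blinfun.rep_eq)
  then show ?thesis using hadj_unique[OF S] by simp
qed

lemma hadj_zero [simp]: "hadj (0 :: 'a::{real_inner,complete_space} \<Rightarrow>\<^sub>L 'a) = 0"
  by (rule hadj_unique) simp

section \<open>The multinomial theorem\<close>

definition deg :: "('n::finite \<Rightarrow> nat) \<Rightarrow> nat" where
  "deg \<alpha> = (\<Sum>i\<in>UNIV. \<alpha> i)"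

definition indices_of_deg :: "nat \<Rightarrow> ('n::finite \<Rightarrow> nat) set" where
  "indices_of_deg k = {\<alpha>. deg \<alpha> = k}"

definition words :: "nat \<Rightarrow> (nat \<Rightarrow> 'n::finite) set" where
  "words k = PiE {..<k} (\<lambda>_. UNIV)"

definition letter_count :: "nat \<Rightarrow> (nat \<Rightarrow> 'n::finite) \<Rightarrow> ('n \<Rightarrow> nat)" where
  "letter_count k w = (\<lambda>i. card {j\<in>{..<k}. w j = i})"

text \<open>The number of words with letter counts \<open>\<alpha>\<close>, that is \<open>|\<alpha>|! / \<alpha>!\<close>.\<close>

definition multinomial_coeff :: "('n::finite \<Rightarrow> nat) \<Rightarrow> nat" where
  "multinomial_coeff \<alpha> = card {w \<in> words (deg \<alpha>). letter_count (deg \<alpha>) w = \<alpha>}"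

lemma finite_indices_of_deg: "finite (indices_of_deg k :: ('n::finite \<Rightarrow> nat) set)"
proof (rule finite_subset)
  show "indices_of_deg k \<subseteq> PiE (UNIV :: 'n set) (\<lambda>_. {..k})"
  proof
    fix \<alpha> :: "'n \<Rightarrow> nat" assume "\<alpha> \<in> indices_of_deg k"
    then have "\<alpha> i \<le> k" for i
      using member_le_sum[of i UNIV \<alpha>] unfolding indices_of_deg_def deg_def by simp
    then show "\<alpha> \<in> PiE UNIV (\<lambda>_. {..k})" by (simp add: PiE_UNIV_domain)
  qed
qed (intro finite_PiE; simp)

lemma finite_words: "finite (words k :: (nat \<Rightarrow> 'n::finite) set)"
  unfolding words_def by (intro finite_PiE) auto

lemma deg_letter_count: "deg (letter_count k w) = k"
proof -
  have "deg (letter_count k w) = (\<Sum>i\<in>UNIV. \<Sum>j\<in>{j\<in>{..<k}. w j = i}. (1::nat))"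
    unfolding deg_def letter_count_def by simp
  also have "\<dots> = (\<Sum>j\<in>{..<k}. (1::nat))"
    by (rule sum.group) auto
  finally show ?thesis by simp
qed

lemma multinomial_theorem:
  fixes x :: "'n::finite \<Rightarrow> 'a::comm_semiring_1"
  shows "(\<Sum>i\<in>UNIV. x i) ^ k
       = (\<Sum>\<alpha>\<in>indices_of_deg k. of_nat (multinomial_coeff \<alpha>) * (\<Prod>i\<in>UNIV. x i ^ \<alpha> i))"
proof -
  have "(\<Sum>i\<in>UNIV. x i) ^ k = (\<Prod>j\<in>{..<k}. \<Sum>i\<in>UNIV. x i)" by simp
  also have "\<dots> = (\<Sum>w\<in>words k. \<Prod>j\<in>{..<k}. x (w j))"
    unfolding words_def by (rule prod_sum_PiE) auto
  also have "\<dots> = (\<Sum>w\<in>words k. \<Prod>i\<in>UNIV. x i ^ letter_count k w i)"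
  proof (rule sum.cong[OF refl])
    fix w :: "nat \<Rightarrow> 'n"
    have "(\<Prod>j\<in>{..<k}. x (w j)) = (\<Prod>i\<in>UNIV. \<Prod>j\<in>{j\<in>{..<k}. w j = i}. x (w j))"
      by (rule prod.group[symmetric]) auto
    also have "\<dots> = (\<Prod>i\<in>UNIV. x i ^ letter_count k w i)"
      unfolding letter_count_def by (intro prod.cong refl) simp
    finally show "(\<Prod>j\<in>{..<k}. x (w j)) = (\<Prod>i\<in>UNIV. x i ^ letter_count k w i)" .
  qed
  also have "\<dots> = (\<Sum>\<alpha>\<in>indices_of_deg k. \<Sum>w\<in>{w\<in>words k. letter_count k w = \<alpha>}.
                     \<Prod>i\<in>UNIV. x i ^ letter_count k w i)"
    by (rule sum.group[symmetric])
       (use finite_indices_of_deg[of k] in \<open>auto simp: finite_words indices_of_deg_def deg_letter_count\<close>)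
  also have "\<dots> = (\<Sum>\<alpha>\<in>indices_of_deg k. of_nat (multinomial_coeff \<alpha>) * (\<Prod>i\<in>UNIV. x i ^ \<alpha> i))"
  proof (rule sum.cong[OF refl])
    fix \<alpha> :: "'n \<Rightarrow> nat" assume "\<alpha> \<in> indices_of_deg k"
    then have "deg \<alpha> = k" by (simp add: indices_of_deg_def)
    then show "(\<Sum>w\<in>{w\<in>words k. letter_count k w = \<alpha>}. \<Prod>i\<in>UNIV. x i ^ letter_count k w i)
        = of_nat (multinomial_coeff \<alpha>) * (\<Prod>i\<in>UNIV. x i ^ \<alpha> i)"
      by (simp add: multinomial_coeff_def)
  qed
  finally show ?thesis .
qed

lemma finite_deg_less: "finite {\<alpha> :: 'n::finite \<Rightarrow> nat. deg \<alpha> < K}"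
proof -
  have "{\<alpha> :: 'n \<Rightarrow> nat. deg \<alpha> < K} = (\<Union>k<K. indices_of_deg k)" by (auto simp: indices_of_deg_def)
  then show ?thesis by (auto intro!: finite_UN_I finite_indices_of_deg)
qed

lemma sum_deg_less:
  "sum F {\<alpha> :: 'n::finite \<Rightarrow> nat. deg \<alpha> < K} = (\<Sum>k<K. sum F (indices_of_deg k))"
proof -
  have "sum F {\<alpha>. deg \<alpha> < K} = (\<Sum>k<K. sum F {\<alpha>\<in>{\<alpha> :: 'n \<Rightarrow> nat. deg \<alpha> < K}. deg \<alpha> = k})"
    by (rule sum.group[symmetric]) (auto simp: finite_deg_less)
  also have "\<dots> = (\<Sum>k<K. sum F (indices_of_deg k))"
    by (intro sum.cong refl) (auto simp: indices_of_deg_def)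
  finally show ?thesis .
qed

lemma sum_le_sum_indices_of_deg:
  fixes F :: "('n::finite \<Rightarrow> nat) \<Rightarrow> real"
  assumes "finite Y" "\<And>\<alpha>. 0 \<le> F \<alpha>"
  shows "sum F Y \<le> (\<Sum>k\<in>deg ` Y. sum F (indices_of_deg k))"
proof -
  have "sum F Y = (\<Sum>k\<in>deg ` Y. sum F {\<alpha>\<in>Y. deg \<alpha> = k})"
    by (rule sum.group[symmetric]) (use assms in auto)
  also have "\<dots> \<le> (\<Sum>k\<in>deg ` Y. sum F (indices_of_deg k))"
    by (intro sum_mono sum_mono2 finite_indices_of_deg) (auto simp: indices_of_deg_def assms)
  finally show ?thesis .
qed

lemma has_sum_by_degree:
  fixes F :: "('n::finite \<Rightarrow> nat) \<Rightarrow> 'v::real_normed_vector"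
  assumes G: "\<And>k. (\<Sum>\<alpha>\<in>indices_of_deg k. norm (F \<alpha>)) \<le> G k" and sG: "summable G"
    and H: "\<And>k. (\<Sum>\<alpha>\<in>indices_of_deg k. F \<alpha>) = Hs k" and sH: "Hs sums L"
  shows "(F has_sum L) UNIV"
  unfolding has_sum_def tendsto_iff
proof (intro allI impI)
  fix \<epsilon> :: real assume "\<epsilon> > 0"
  have G0: "0 \<le> G k" for k by (rule order_trans[OF _ G]) (simp add: sum_nonneg)
  obtain K0 where K0: "\<And>n. n \<ge> K0 \<Longrightarrow> norm (\<Sum>i. G (i + n)) < \<epsilon> / 2"
    using suminf_exist_split[OF _ sG, of "\<epsilon>/2"] \<open>\<epsilon> > 0\<close> by auto
  obtain K1 where K1: "\<And>n. n \<ge> K1 \<Longrightarrow> norm ((\<Sum>k<n. Hs k) - L) < \<epsilon> / 2"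
    using sH \<open>\<epsilon> > 0\<close> unfolding sums_def LIMSEQ_iff by (meson half_gt_zero)
  define K where "K = max K0 K1"
  define E where "E = {\<alpha> :: 'n \<Rightarrow> nat. deg \<alpha> < K}"
  have fE: "finite E" unfolding E_def by (rule finite_deg_less)
  show "\<forall>\<^sub>F S in finite_subsets_at_top UNIV. dist (sum F S) L < \<epsilon>"
    unfolding eventually_finite_subsets_at_top
  proof (intro exI conjI allI impI)
    show "finite E" "E \<subseteq> UNIV" by (auto simp: fE)
    fix Y assume Y: "finite Y \<and> E \<subseteq> Y \<and> Y \<subseteq> UNIV"
    have split: "sum F Y = sum F E + sum F (Y - E)"
      using Y fE by (metis add.commute sum.subset_diff)
    have SE: "sum F E = (\<Sum>k<K. Hs k)" unfolding E_def sum_deg_less H ..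
    have ge: "k \<ge> K" if "k \<in> deg ` (Y - E)" for k using that by (auto simp: E_def)
    have "norm (sum F (Y - E)) \<le> sum (\<lambda>\<alpha>. norm (F \<alpha>)) (Y - E)" by (rule norm_sum)
    also have "\<dots> \<le> (\<Sum>k\<in>deg ` (Y - E). \<Sum>\<alpha>\<in>indices_of_deg k. norm (F \<alpha>))"
      by (rule sum_le_sum_indices_of_deg) (use Y in auto)
    also have "\<dots> \<le> (\<Sum>k\<in>deg ` (Y - E). G k)" by (intro sum_mono G)
    also have "\<dots> = (\<Sum>i\<in>(\<lambda>k. k - K) ` deg ` (Y - E). G (i + K))"
    proof -
      have "inj_on (\<lambda>k. k - K) (deg ` (Y - E))"
        using ge unfolding inj_on_def by (metis le_add_diff_inverse)
      then show ?thesis by (simp add: sum.reindex ge cong: sum.cong)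
    qed
    also have "\<dots> \<le> (\<Sum>i. G (i + K))"
      by (intro sum_le_suminf summable_ignore_initial_segment sG) (use Y G0 in auto)
    also have "\<dots> < \<epsilon> / 2" using K0[of K] by (simp add: K_def)
    finally have "norm (sum F (Y - E)) < \<epsilon> / 2" .
    moreover have "norm ((\<Sum>k<K. Hs k) - L) < \<epsilon> / 2" using K1[of K] by (simp add: K_def)
    moreover have "dist (sum F Y) L \<le> norm ((\<Sum>k<K. Hs k) - L) + norm (sum F (Y - E))"
      unfolding dist_norm split SE by (metis add_diff_eq diff_add_eq norm_triangle_ineq)
    ultimately show "dist (sum F Y) L < \<epsilon>" by linarith
  qed
qed

lemma nnsum_le_iff:
  assumes "\<And>x. 0 \<le> t x"
  shows "nnsum_le t B \<longleftrightarrow> (\<forall>F. finite F \<longrightarrow> sum t F \<le> B)"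
proof
  assume "nnsum_le t B"
  then have s: "t summable_on UNIV" and b: "infsum t UNIV \<le> B" unfolding nnsum_le_def by auto
  show "\<forall>F. finite F \<longrightarrow> sum t F \<le> B"
    using finite_sum_le_infsum[OF s] assms b by (meson UNIV_I order_trans subset_UNIV)
next
  assume h: "\<forall>F. finite F \<longrightarrow> sum t F \<le> B"
  have s: "t summable_on UNIV"
    by (rule nonneg_bdd_above_summable_on) (use assms h in \<open>auto intro!: bdd_aboveI[of _ B]\<close>)
  have "infsum t UNIV \<le> B" by (rule infsum_le_finite_sums[OF s]) (use h in auto)
  then show "nnsum_le t B" using s unfolding nnsum_le_def by simp
qed

lemma nnsum_le_single:
  assumes "\<And>x. 0 \<le> t x" "\<And>x. x \<noteq> e \<Longrightarrow> t x = 0"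
  shows "nnsum_le t B \<longleftrightarrow> t e \<le> B"
proof -
  have sum_eq: "sum t F = (if e \<in> F then t e else 0)" if "finite F" for F
  proof -
    have "sum t F = (\<Sum>x\<in>F. if x = e then t e else 0)" by (intro sum.cong) (use assms in auto)
    then show ?thesis using that by (simp add: sum.delta)
  qed
  have "(\<forall>F. finite F \<longrightarrow> sum t F \<le> B) \<longleftrightarrow> t e \<le> B"
  proof
    assume "\<forall>F. finite F \<longrightarrow> sum t F \<le> B"
    then have "sum t {e} \<le> B" by blast
    then show "t e \<le> B" by simp
  qed (use sum_eq assms(1)[of e] in auto)
  then show ?thesis using nnsum_le_iff[of t B] assms(1) by simp
qed

lemma has_sum_single:
  fixes f :: "'a \<Rightarrow> 'b::{comm_monoid_add,topological_space}"
  assumes "\<And>x. x \<noteq> e \<Longrightarrow> f x = 0"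
  shows "(f has_sum f e) UNIV"
proof -
  have "(f has_sum f e) {e}" by (rule has_sum_finiteI) auto
  then show ?thesis by (subst has_sum_cong_neutral[of "{e}" UNIV f f]) (use assms in auto)
qed

lemma powr_power_swap: "0 \<le> x \<Longrightarrow> (x ^ k) powr p = (x powr p) ^ k"
  for x p :: real
  by (induction k) (auto simp: powr_mult)

lemma self_le_powr_nat:
  assumes "1 \<le> p" shows "real m \<le> real m powr p"
proof (cases "m = 0")
  case False
  then have "real m powr 1 \<le> real m powr p" using assms by (intro powr_mono) auto
  then show ?thesis by simp
qed simp

lemma convex_on_powr_nonneg: "1 \<le> p \<Longrightarrow> convex_on {0..} (\<lambda>x::real. x powr p)"
proof (rule convex_onI)
  fix t x y :: real assume p: "1 \<le> p" and t: "0 < t" "t < 1" and xy: "x \<in> {0..}" "y \<in> {0..}"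
  have sub: "(s * x) powr p \<le> s * x powr p" if "0 \<le> s" "s \<le> 1" "0 \<le> x" for s x :: real
  proof -
    have "s powr p \<le> s" using powr_mono'[of 1 p s] that p by simp
    then show ?thesis using that by (simp add: powr_mult mult_right_mono)
  qed
  consider "x = 0" | "y = 0" | "x > 0" "y > 0" using xy by force
  then show "((1 - t) *\<^sub>R x + t *\<^sub>R y) powr p \<le> (1 - t) * x powr p + t * y powr p"
  proof cases
    case 1 then show ?thesis using sub[of t y] t xy by simp
  next
    case 2 then show ?thesis using sub[of "1 - t" x] t xy by simp
  next
    case 3 then show ?thesis using convex_onD[OF powr_convex[OF p], of t x y] t by simp
  qed
qed (simp add: convex_real_interval)

lemma power_mean_le:
  fixes r :: "'i \<Rightarrow> real"
  assumes "finite A" "A \<noteq> {}" "\<And>i. i \<in> A \<Longrightarrow> 0 \<le> r i" "1 \<le> p"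
  shows "real (card A) * ((\<Sum>i\<in>A. r i) / real (card A)) powr p \<le> (\<Sum>i\<in>A. r i powr p)"
proof -
  let ?n = "real (card A)"
  have n0: "?n > 0" using assms by (simp add: card_gt_0_iff)
  have "(\<Sum>i\<in>A. (1 / ?n) *\<^sub>R r i) powr p \<le> (\<Sum>i\<in>A. (1 / ?n) * r i powr p)"
    by (rule convex_on_sum[OF _ _ convex_on_powr_nonneg[OF assms(4)], of A "\<lambda>_. 1 / ?n" r])
       (use assms n0 in auto)
  then show ?thesis using n0 by (simp add: sum_divide_distrib[symmetric] field_simps)
qed

lemma powr_le_mult_powr:
  fixes x y B :: real
  assumes "0 \<le> x" "x \<le> y * B" "0 \<le> y" "0 < p"
  shows "x powr p \<le> y powr p * B powr p"
proof (cases "y = 0")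
  case False
  then have "0 < y" "0 \<le> y * B" using assms by linarith+
  then have "0 \<le> B" by (simp add: zero_le_mult_iff)
  then have "x powr p \<le> (y * B) powr p" using assms by (intro powr_mono2) auto
  then show ?thesis using \<open>0 \<le> B\<close> assms by (simp add: powr_mult)
qed (use assms in auto)

lemma le_divide_of_powr_le:
  fixes x u L B p :: real
  assumes "0 \<le> x" "0 < u" "0 < p" "0 \<le> L" "0 \<le> B"
    and "u powr p * x powr p \<le> L powr p * B powr p"
  shows "x \<le> L * B / u"
proof -
  have "(u * x) powr p \<le> (L * B) powr p" using assms by (simp add: powr_mult)
  then have "u * x \<le> L * B"
    using powr_less_mono2[of p "L * B" "u * x"] assms by (metis linorder_not_le mult_nonneg_nonneg)
  then show ?thesis using assms by (simp add: field_simps)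
qed

lemma is_cnorm_zero:
  fixes N :: "complex ^ 'n::finite \<Rightarrow> real"
  assumes "is_cnorm N" shows "N 0 = 0"
  using assms unfolding is_cnorm_def by (metis norm_zero mult_zero_left vector_smult_lzero)

lemma is_cnorm_nonneg:
  fixes N :: "complex ^ 'n::finite \<Rightarrow> real"
  assumes "is_cnorm N" shows "0 \<le> N x"
proof -
  have "N ((-1) *s x) = cmod (-1) * N x" using assms unfolding is_cnorm_def by blast
  then have "N ((-1) *s x) = N x" by simp
  moreover have "N (x + (-1) *s x) \<le> N x + N ((-1) *s x)" using assms unfolding is_cnorm_def by blast
  moreover have "x + (-1) *s x = 0" by (simp add: vec_eq_iff)
  ultimately show ?thesis using is_cnorm_zero[OF assms] by simp
qed

lemma is_cnorm_scale_axis: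
  fixes N :: "complex ^ 'n::finite \<Rightarrow> real"
  assumes "is_cnorm N" "normalized_1_unconditional N"
  shows "N (v *s axis i 1) = cmod v"
  using assms unfolding is_cnorm_def normalized_1_unconditional_def by simp

lemma cmod_nth_le_N:
  fixes N :: "complex ^ 'n::finite \<Rightarrow> real"
  assumes "is_cnorm N" "normalized_1_unconditional N"
  shows "cmod (z $ i) \<le> N z"
proof -
  have "(\<chi> j. (axis i 1 :: complex ^ 'n) $ j * z $ j) = (z $ i) *s axis i 1"
    by (simp add: vec_eq_iff axis_def)
  moreover have "\<forall>j. cmod ((axis i 1 :: complex ^ 'n) $ j) \<le> 1" by (simp add: axis_def)
  ultimately have "N ((z $ i) *s axis i 1) \<le> N z"
    using assms(2) unfolding normalized_1_unconditional_def by metis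
  then show ?thesis using is_cnorm_scale_axis[OF assms] by simp
qed

lemma l1_norm_le_id_to_l1_norm:
  fixes N :: "complex ^ 'n::finite \<Rightarrow> real"
  assumes N: "is_cnorm N" "normalized_1_unconditional N"
  shows "(\<Sum>i\<in>UNIV. cmod (z $ i)) \<le> id_to_l1_norm N * N z"
proof (cases "z = 0")
  case True then show ?thesis using is_cnorm_zero[OF N(1)] by simp
next
  case False
  let ?L = "{(\<Sum>i\<in>UNIV. cmod (z $ i)) | z :: complex ^ 'n. N z \<le> 1}"
  have bdd: "bdd_above ?L"
  proof (rule bdd_aboveI[of _ "real CARD('n)"])
    fix x assume "x \<in> ?L"
    then obtain z :: "complex ^ 'n" where z: "x = (\<Sum>i\<in>UNIV. cmod (z $ i))" "N z \<le> 1" by blast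
    have "(\<Sum>i\<in>UNIV. cmod (z $ i)) \<le> (\<Sum>i\<in>(UNIV::'n set). 1)"
      using cmod_nth_le_N[OF N, of z] z(2) by (intro sum_mono) (meson order_trans)
    then show "x \<le> real CARD('n)" using z by simp
  qed
  have Np: "N z > 0"
    using False N(1) is_cnorm_nonneg[OF N(1), of z] unfolding is_cnorm_def by force
  define z' where "z' = complex_of_real (1 / N z) *s z"
  have "N z' = 1"
    using N(1) Np unfolding z'_def is_cnorm_def by (simp add: norm_divide)
  then have "(\<Sum>i\<in>UNIV. cmod (z' $ i)) \<le> id_to_l1_norm N"
    unfolding id_to_l1_norm_def using bdd by (intro cSup_upper) auto
  moreover have "(\<Sum>i\<in>UNIV. cmod (z' $ i)) = (\<Sum>i\<in>UNIV. cmod (z $ i)) / N z"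
    unfolding z'_def using Np by (simp add: norm_mult norm_divide sum_divide_distrib)
  ultimately show ?thesis using Np by (simp add: field_simps)
qed

lemma id_to_l1_norm_ge_1:
  fixes N :: "complex ^ 'n::finite \<Rightarrow> real"
  assumes "is_cnorm N" "normalized_1_unconditional N"
  shows "1 \<le> id_to_l1_norm N"
proof -
  fix i :: 'n
  have "(\<Sum>j\<in>UNIV. cmod ((axis i 1 :: complex ^ 'n) $ j)) = 1"
    by (simp add: axis_def if_distrib[of cmod] sum.delta cong: if_cong)
  moreover have "N (axis i 1) = 1" using assms(2) unfolding normalized_1_unconditional_def by blast
  ultimately show ?thesis using l1_norm_le_id_to_l1_norm[OF assms, of "axis i 1"] by simp
qed

lemma l1_norm_lt_id_to_l1_norm:
  fixes N :: "complex ^ 'n::finite \<Rightarrow> real"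
  assumes N: "is_cnorm N" "normalized_1_unconditional N" and z: "z \<in> unit_ball_N N"
  shows "(\<Sum>i\<in>UNIV. cmod (z $ i)) < id_to_l1_norm N"
proof -
  have "(\<Sum>i\<in>UNIV. cmod (z $ i)) \<le> id_to_l1_norm N * N z" by (rule l1_norm_le_id_to_l1_norm[OF N])
  moreover have "id_to_l1_norm N * N z < id_to_l1_norm N * 1"
    using z id_to_l1_norm_ge_1[OF N] unfolding unit_ball_N_def by (intro mult_strict_left_mono) auto
  ultimately show ?thesis by linarith
qed

lemma zero_in_unit_ball_N: "is_cnorm N \<Longrightarrow> 0 \<in> unit_ball_N N"
  unfolding unit_ball_N_def by (simp add: is_cnorm_zero)

definition vec1 :: "complex \<Rightarrow> complex ^ 1" where
  "vec1 w = (\<chi> i. w)"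

lemma vec1_nth [simp]: "vec1 w $ i = w"
  unfolding vec1_def by simp

lemma vec1_in_unit_disc1: "cmod w < 1 \<Longrightarrow> vec1 w \<in> unit_disc1"
  unfolding unit_disc1_def by simp

lemma zero_in_unit_disc1: "0 \<in> unit_disc1"
  unfolding unit_disc1_def by simp

lemma vec1_of_real_in_scaled_disc:
  assumes "0 \<le> x" "x < r"
  shows "vec1 (complex_of_real x) \<in> (\<lambda>w. r *\<^sub>R w) ` unit_disc1"
proof
  have "r *\<^sub>R complex_of_real (x / r) = complex_of_real x" using assms by (simp add: scaleR_conv_of_real)
  then show "vec1 (complex_of_real x) = r *\<^sub>R vec1 (complex_of_real (x / r))" by (simp add: vec_eq_iff)
  show "vec1 (complex_of_real (x / r)) \<in> unit_disc1"
    using assms by (intro vec1_in_unit_disc1) (simp only: norm_of_real, simp)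
qed

lemma monom_1: "monom (z :: complex ^ 1) \<beta> = (z $ 1) ^ (\<beta> 1)"
  unfolding monom_def UNIV_1 by simp

lemma monom_zero: "monom 0 \<alpha> = (if \<alpha> = (\<lambda>_. 0) then 1 else 0)"
  unfolding monom_def by (auto simp: zero_power prod_zero_iff)

lemma rmonom_zero: "rmonom 0 \<alpha> = (if \<alpha> = (\<lambda>_. 0) then 1 else 0)"
  unfolding rmonom_def by (auto simp: zero_power prod_zero_iff)

lemma monom_unit: "monom z (\<lambda>j. if j = i then 1 else 0) = z $ i"
  unfolding monom_def by (simp add: if_distrib[of "\<lambda>n. _ ^ n"] prod.delta cong: if_cong)

lemma rmonom_unit: "rmonom r (\<lambda>j. if j = i then 1 else 0) = r $ i"
  unfolding rmonom_def by (simp add: if_distrib[of "\<lambda>n. _ ^ n"] prod.delta cong: if_cong)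

lemma norm_monom: "cmod (monom x \<alpha>) = (\<Prod>i\<in>UNIV. cmod (x $ i) ^ \<alpha> i)"
  unfolding monom_def by (simp add: prod_norm[symmetric] norm_power)

lemma cnj_monom: "cnj (monom z \<alpha>) = monom (\<chi> i. cnj (z $ i)) \<alpha>"
  unfolding monom_def by (simp add: cnj_prod)

lemma monom_divide:
  "monom (\<chi> i. y $ i / c) \<alpha> = monom y \<alpha> / c ^ deg \<alpha>"
  unfolding monom_def deg_def by (simp add: power_divide prod_dividef power_sum)

lemma rmonom_powr:
  assumes "\<And>i. 0 \<le> r $ i"
  shows "rmonom r \<alpha> powr p = (\<Prod>i\<in>UNIV. (r $ i powr p) ^ \<alpha> i)"
  unfolding rmonom_def prod_powr_distrib using assms by (simp add: powr_power_swap)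

section \<open>Pluriharmonic functions and admissible radii\<close>

lemma ph_rep_at_zero:
  assumes "ph_rep J \<Omega> f a b" "0 \<in> \<Omega>"
  shows "f 0 = a (\<lambda>_. 0)"
proof -
  have "((\<lambda>\<alpha>. cscale J (monom 0 \<alpha>) (a \<alpha>)) has_sum a (\<lambda>_. 0)) UNIV"
    using has_sum_single[where f="\<lambda>\<alpha>. cscale J (monom 0 \<alpha>) (a \<alpha>)" and e="\<lambda>_. 0"]
    by (simp add: monom_zero cscale_def)
  then have "(\<Sum>\<^sub>\<infinity>\<alpha>. cscale J (monom 0 \<alpha>) (a \<alpha>)) = a (\<lambda>_. 0)"
    by (rule infsumI)
  moreover have "(\<lambda>\<alpha>. cscale J (cnj (monom 0 \<alpha>)) (hadj (b \<alpha>))) = (\<lambda>_. 0)"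
    using assms(1) unfolding ph_rep_def by (auto simp: monom_zero cscale_def)
  ultimately show ?thesis using assms unfolding ph_rep_def by auto
qed

lemma norm_le_supnorm:
  assumes "bounded (f ` \<Omega>)" "z \<in> \<Omega>"
  shows "norm (f z) \<le> supnorm \<Omega> f"
proof -
  have "bdd_above ((\<lambda>z. norm (f z)) ` \<Omega>)"
    using assms(1) by (metis bdd_above_norm image_image)
  then show ?thesis unfolding supnorm_def using assms(2) by (rule cSUP_upper2) simp
qed

lemma supnorm_nonneg:
  assumes "bounded (f ` \<Omega>)" "z \<in> \<Omega>"
  shows "0 \<le> supnorm \<Omega> f"
  using norm_le_supnorm[OF assms] norm_ge_zero order_trans by blast

lemma supnorm_le_supnorm_comp:
  assumes "bounded (g ` \<Omega>')" "\<Omega> \<noteq> {}" "\<And>z. z \<in> \<Omega> \<Longrightarrow> \<phi> z \<in> \<Omega>'"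
  shows "supnorm \<Omega> (g \<circ> \<phi>) \<le> supnorm \<Omega>' g"
  unfolding supnorm_def[of \<Omega>]
  using assms norm_le_supnorm[OF assms(1)] by (intro cSUP_least) auto

definition R_admissible ::
  "('h::{real_inner,complete_space} \<Rightarrow>\<^sub>L 'h) \<Rightarrow> (('h \<Rightarrow>\<^sub>L 'h) \<Rightarrow> 'y::banach) \<Rightarrow> real \<Rightarrow>
   (complex ^ 'k::finite) set \<Rightarrow> real \<Rightarrow> real \<Rightarrow> bool" where
  "R_admissible J U lam \<Omega> p r \<longleftrightarrow>
     (\<forall>f a b. ph_rep J \<Omega> f a b \<and> bounded (f ` \<Omega>) \<longrightarrow>
        (\<forall>z\<in>(\<lambda>w. r *\<^sub>R w) ` \<Omega>.
           nnsum_le (\<lambda>\<alpha>. (norm (U (a \<alpha>)) powr p + norm (U (b \<alpha>)) powr p) * cmod (monom z \<alpha>) powr p)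
                    (lam powr p * supnorm \<Omega> f powr p)))"

definition AP_admissible ::
  "('h::{real_inner,complete_space} \<Rightarrow>\<^sub>L 'h) \<Rightarrow> (('h \<Rightarrow>\<^sub>L 'h) \<Rightarrow> 'y::banach) \<Rightarrow> real \<Rightarrow>
   (complex ^ 'k::finite) set \<Rightarrow> real \<Rightarrow> real ^ 'k \<Rightarrow> bool" where
  "AP_admissible J U lam \<Omega> p r \<longleftrightarrow>
     (\<forall>f a b. ph_rep J \<Omega> f a b \<and> bounded (f ` \<Omega>) \<longrightarrow>
        nnsum_le (\<lambda>\<alpha>. (norm (U (a \<alpha>)) powr p + norm (U (b \<alpha>)) powr p) * rmonom r \<alpha> powr p)
                 (lam powr p * supnorm \<Omega> f powr p))"

definition R_radii ::
  "('h::{real_inner,complete_space} \<Rightarrow>\<^sub>L 'h) \<Rightarrow> (('h \<Rightarrow>\<^sub>L 'h) \<Rightarrow> 'y::banach) \<Rightarrow> real \<Rightarrow>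
   (complex ^ 'k::finite) set \<Rightarrow> real \<Rightarrow> real set" where
  "R_radii J U lam \<Omega> p = {r. r \<ge> 0 \<and> R_admissible J U lam \<Omega> p r}"

definition AP_means ::
  "('h::{real_inner,complete_space} \<Rightarrow>\<^sub>L 'h) \<Rightarrow> (('h \<Rightarrow>\<^sub>L 'h) \<Rightarrow> 'y::banach) \<Rightarrow> real \<Rightarrow>
   (complex ^ 'k::finite) set \<Rightarrow> real \<Rightarrow> real set" where
  "AP_means J U lam \<Omega> p = {(\<Sum>i\<in>UNIV. r $ i) / real CARD('k) | r :: real ^ 'k.
     (\<forall>i. r $ i \<ge> 0) \<and> AP_admissible J U lam \<Omega> p r}"

lemma Rlam_eq: "Rlam J U lam \<Omega> p = Sup (R_radii J U lam \<Omega> p)"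
  unfolding Rlam_def R_radii_def R_admissible_def ..

lemma APlam_eq: "APlam J U lam \<Omega> p = Sup (AP_means J U lam \<Omega> p)"
  unfolding APlam_def AP_means_def AP_admissible_def ..

lemma norm_U_constant_coeff_le:
  assumes U: "bounded_clinear_U J Jy U" and lam: "opnorm_U J U \<le> lam" "0 \<le> lam"
    and f: "ph_rep J \<Omega> f a b" "bounded (f ` \<Omega>)" and z0: "0 \<in> \<Omega>"
  shows "norm (U (a (\<lambda>_. 0))) \<le> lam * supnorm \<Omega> f"
proof -
  have "a (\<lambda>_. 0) \<in> Bop J" using f unfolding ph_rep_def by blast
  then have "norm (U (a (\<lambda>_. 0))) \<le> opnorm_U J U * norm (f 0)"
    by (simp add: ph_rep_at_zero[OF f(1) z0] norm_U_le_opnorm_U[OF U])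
  also have "\<dots> \<le> lam * supnorm \<Omega> f"
    using norm_le_supnorm[OF f(2) z0] lam by (intro mult_mono) auto
  finally show ?thesis .
qed

text \<open>At radius zero only the constant coefficient \<open>a\<^sub>0\<close> contributes, and \<open>\<parallel>U a\<^sub>0\<parallel> \<le> \<parallel>U\<parallel> \<parallel>f(0)\<parallel>\<close>.\<close>

lemma R_admissible_zero:
  assumes U: "bounded_clinear_U J Jy U" and lam: "opnorm_U J U \<le> lam" "0 \<le> lam"
    and p: "0 < p" and z0: "0 \<in> \<Omega>"
  shows "R_admissible J U lam \<Omega> p 0"
  unfolding R_admissible_def
proof (intro allI impI ballI)
  fix f a b z assume fab: "ph_rep J \<Omega> f a b \<and> bounded (f ` \<Omega>)" and "z \<in> (\<lambda>w. 0 *\<^sub>R w) ` \<Omega>"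
  then have z: "z = 0" and b0: "b (\<lambda>_. 0) = 0" unfolding ph_rep_def by auto
  show "nnsum_le (\<lambda>\<alpha>. (norm (U (a \<alpha>)) powr p + norm (U (b \<alpha>)) powr p) * cmod (monom z \<alpha>) powr p)
                    (lam powr p * supnorm \<Omega> f powr p)"
    using powr_le_mult_powr[OF _ norm_U_constant_coeff_le[OF U lam _ _ z0]] fab lam p
    by (subst nnsum_le_single[where e="\<lambda>_. 0"])
       (auto simp: z monom_zero b0 bounded_clinear_U_zero[OF U])
qed

lemma AP_admissible_zero:
  assumes U: "bounded_clinear_U J Jy U" and lam: "opnorm_U J U \<le> lam" "0 \<le> lam"
    and p: "0 < p" and z0: "0 \<in> \<Omega>"
  shows "AP_admissible J U lam \<Omega> p 0"
  unfolding AP_admissible_def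
proof (intro allI impI)
  fix f a b assume fab: "ph_rep J \<Omega> f a b \<and> bounded (f ` \<Omega>)"
  then have b0: "b (\<lambda>_. 0) = 0" unfolding ph_rep_def by auto
  show "nnsum_le (\<lambda>\<alpha>. (norm (U (a \<alpha>)) powr p + norm (U (b \<alpha>)) powr p) * rmonom 0 \<alpha> powr p)
                    (lam powr p * supnorm \<Omega> f powr p)"
    using powr_le_mult_powr[OF _ norm_U_constant_coeff_le[OF U lam _ _ z0]] fab lam p
    by (subst nnsum_le_single[where e="\<lambda>_. 0"])
       (auto simp: rmonom_zero b0 bounded_clinear_U_zero[OF U])
qed

lemma ph_rep_monomial:
  assumes "T \<in> Bop J"
  shows "ph_rep J \<Omega> (\<lambda>z. cscale J (monom z e) T) (\<lambda>\<alpha>. if \<alpha> = e then T else 0) (\<lambda>_. 0)"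
  unfolding ph_rep_def
proof (intro conjI allI ballI)
  fix z
  have hs: "((\<lambda>\<alpha>. cscale J (monom z \<alpha>) (if \<alpha> = e then T else 0)) has_sum cscale J (monom z e) T) UNIV"
    using has_sum_single[where f="\<lambda>\<alpha>. cscale J (monom z \<alpha>) (if \<alpha> = e then T else 0)" and e=e] by simp
  then show "(\<lambda>\<alpha>. cscale J (monom z \<alpha>) (if \<alpha> = e then T else 0)) summable_on UNIV"
    unfolding summable_on_def by blast
  show "cscale J (monom z e) T = (\<Sum>\<^sub>\<infinity>\<alpha>. cscale J (monom z \<alpha>) (if \<alpha> = e then T else 0))
      + (\<Sum>\<^sub>\<infinity>\<alpha>. cscale J (cnj (monom z \<alpha>)) (hadj 0))"
    using infsumI[OF hs] by simp
qed (use assms in auto)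

lemma monomial_test:
  assumes hJ: "hilbert_cstruct J" and U: "bounded_clinear_U J Jy U" and T: "T \<in> Bop J"
    and \<Omega>: "\<Omega> \<noteq> {}" "\<And>z. z \<in> \<Omega> \<Longrightarrow> cmod (monom z e) \<le> 1"
    and lam: "0 \<le> lam" and p: "0 < p" and X: "\<And>\<alpha>. 0 \<le> X \<alpha>"
    and adm: "\<And>f a b. ph_rep J \<Omega> f a b \<Longrightarrow> bounded (f ` \<Omega>) \<Longrightarrow>
       nnsum_le (\<lambda>\<alpha>. (norm (U (a \<alpha>)) powr p + norm (U (b \<alpha>)) powr p) * X \<alpha>) (lam powr p * supnorm \<Omega> f powr p)"
  shows "norm (U T) powr p * X e \<le> lam powr p * norm T powr p"
proof -
  define f where "f = (\<lambda>z. cscale J (monom z e) T)"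
  have f_le: "norm (f z) \<le> norm T" if "z \<in> \<Omega>" for z
    using \<Omega>(2)[OF that] by (simp add: f_def norm_cscale[OF hJ] mult_left_le_one_le)
  then have bdd: "bounded (f ` \<Omega>)" unfolding bounded_iff by blast
  have sup: "supnorm \<Omega> f \<le> norm T"
    unfolding supnorm_def using \<Omega>(1) f_le by (intro cSUP_least) auto
  have "nnsum_le (\<lambda>\<alpha>. (norm (U (if \<alpha> = e then T else 0)) powr p + norm (U 0) powr p) * X \<alpha>)
          (lam powr p * supnorm \<Omega> f powr p)"
    using adm[OF ph_rep_monomial[OF T] bdd[unfolded f_def]] by (simp add: f_def)
  then have "\<forall>F. finite F \<longrightarrow> (\<Sum>\<alpha>\<in>F. (norm (U (if \<alpha> = e then T else 0)) powr p + norm (U 0) powr p) * X \<alpha>)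
      \<le> lam powr p * supnorm \<Omega> f powr p"
    using X by (subst (asm) nnsum_le_iff) auto
  from this[rule_format, of "{e}"]
  have "(norm (U T) powr p + norm (U 0) powr p) * X e \<le> lam powr p * supnorm \<Omega> f powr p"
    by simp
  also have "\<dots> \<le> lam powr p * norm T powr p"
    using sup supnorm_nonneg[OF bdd] \<Omega>(1) lam p by (intro mult_left_mono powr_mono2) auto
  finally show ?thesis by (simp add: bounded_clinear_U_zero[OF U])
qed

lemma R_admissible_le:
  assumes hJ: "hilbert_cstruct J" and U: "bounded_clinear_U J Jy U" and T: "T \<in> Bop J" "U T \<noteq> 0"
    and p: "0 < p" and lam: "0 \<le> lam" and r: "R_admissible J U lam unit_disc1 p r"
  shows "r \<le> lam * norm T / norm (U T)"
proof (rule dense_le)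
  fix x assume "x < r"
  show "x \<le> lam * norm T / norm (U T)"
  proof (cases "0 \<le> x")
    case True
    have "norm (U T) powr p * cmod (monom (vec1 (complex_of_real x)) (\<lambda>_. 1)) powr p
        \<le> lam powr p * norm T powr p"
    proof (rule monomial_test[OF hJ U T(1), where e="\<lambda>_. 1"
          and X="\<lambda>\<alpha>. cmod (monom (vec1 (complex_of_real x)) \<alpha>) powr p"])
      show "unit_disc1 \<noteq> {}" using zero_in_unit_disc1 by auto
      show "cmod (monom z (\<lambda>_. 1)) \<le> 1" if "z \<in> unit_disc1" for z
        using that by (simp add: unit_disc1_def monom_1)
      show "nnsum_le (\<lambda>\<alpha>. (norm (U (a \<alpha>)) powr p + norm (U (b \<alpha>)) powr p)
              * cmod (monom (vec1 (complex_of_real x)) \<alpha>) powr p) (lam powr p * supnorm unit_disc1 f powr p)"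
        if "ph_rep J unit_disc1 f a b" "bounded (f ` unit_disc1)" for f a b
        using r that vec1_of_real_in_scaled_disc[OF True \<open>x < r\<close>] unfolding R_admissible_def by blast
    qed (use lam p in auto)
    then have "norm (U T) powr p * x powr p \<le> lam powr p * norm T powr p"
      using True by (simp add: monom_1)
    then show ?thesis using True p lam T(2) by (intro le_divide_of_powr_le) auto
  next
    case False
    moreover have "0 \<le> lam * norm T / norm (U T)" using lam by simp
    ultimately show ?thesis by linarith
  qed
qed

lemma AP_admissible_le:
  fixes N :: "complex ^ 'n::finite \<Rightarrow> real"
  assumes hJ: "hilbert_cstruct J" and U: "bounded_clinear_U J Jy U" and T: "T \<in> Bop J" "U T \<noteq> 0"
    and p: "0 < p" and lam: "0 \<le> lam" and N: "is_cnorm N" "normalized_1_unconditional N"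
    and r: "\<forall>i. 0 \<le> r $ i" "AP_admissible J U lam (unit_ball_N N) p r"
  shows "r $ i \<le> lam * norm T / norm (U T)"
proof -
  have "norm (U T) powr p * rmonom r (\<lambda>j. if j = i then 1 else 0) powr p \<le> lam powr p * norm T powr p"
  proof (rule monomial_test[OF hJ U T(1), where e="\<lambda>j. if j = i then 1 else 0"
        and X="\<lambda>\<alpha>. rmonom r \<alpha> powr p"])
    show "unit_ball_N N \<noteq> {}" using zero_in_unit_ball_N[OF N(1)] by auto
    show "cmod (monom z (\<lambda>j. if j = i then 1 else 0)) \<le> 1" if "z \<in> unit_ball_N N" for z
      using that cmod_nth_le_N[OF N, of z i] unfolding unit_ball_N_def monom_unit by simp
  qed (use r lam p in \<open>auto simp: AP_admissible_def\<close>)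
  then show ?thesis using r(1) p lam T(2) by (intro le_divide_of_powr_le) (auto simp: rmonom_unit)
qed

lemma zero_in_R_radii:
  assumes "bounded_clinear_U J Jy U" "opnorm_U J U \<le> lam" "0 \<le> lam" "0 < p" "0 \<in> \<Omega>"
  shows "0 \<in> R_radii J U lam \<Omega> p"
  using R_admissible_zero[OF assms] unfolding R_radii_def by simp

lemma zero_in_AP_means:
  assumes "bounded_clinear_U J Jy U" "opnorm_U J U \<le> lam" "0 \<le> lam" "0 < p" "0 \<in> \<Omega>"
  shows "0 \<in> AP_means J U lam \<Omega> p"
  unfolding AP_means_def using AP_admissible_zero[OF assms]
  by (intro CollectI exI[of _ 0]) simp

lemma bdd_above_R_radii:
  assumes hJ: "hilbert_cstruct J" and U: "bounded_clinear_U J Jy U" and T: "T \<in> Bop J" "U T \<noteq> 0"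
    and p: "0 < p" and lam: "0 \<le> lam"
  shows "bdd_above (R_radii J U lam unit_disc1 p)"
  using R_admissible_le[OF hJ U T p lam] unfolding R_radii_def
  by (intro bdd_aboveI[of _ "lam * norm T / norm (U T)"]) auto

lemma bdd_above_AP_means:
  fixes N :: "complex ^ 'n::finite \<Rightarrow> real"
  assumes hJ: "hilbert_cstruct J" and U: "bounded_clinear_U J Jy U" and T: "T \<in> Bop J" "U T \<noteq> 0"
    and p: "0 < p" and lam: "0 \<le> lam" and N: "is_cnorm N" "normalized_1_unconditional N"
  shows "bdd_above (AP_means J U lam (unit_ball_N N) p)"
proof -
  define B where "B = lam * norm T / norm (U T)"
  show ?thesis
  proof (rule bdd_aboveI[of _ B])
    fix y assume "y \<in> AP_means J U lam (unit_ball_N N) p"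
    then obtain r :: "real ^ 'n" where r: "y = (\<Sum>i\<in>UNIV. r $ i) / real CARD('n)"
      "\<forall>i. r $ i \<ge> 0" "AP_admissible J U lam (unit_ball_N N) p r" unfolding AP_means_def by blast
    have "(\<Sum>i\<in>UNIV. r $ i) \<le> (\<Sum>i\<in>(UNIV::'n set). B)"
      unfolding B_def by (intro sum_mono AP_admissible_le[OF hJ U T p lam N r(2,3)])
    then have "y * real CARD('n) \<le> B * real CARD('n)" using r(1) by (simp add: mult.commute)
    then show "y \<le> B" by simp
  qed
qed

section \<open>Restriction to a coordinate axis\<close>

definition axis_embed :: "'n \<Rightarrow> complex ^ 1 \<Rightarrow> complex ^ 'n::finite" where
  "axis_embed i0 v = (\<chi> i. if i = i0 then v $ 1 else 0)"

definition index_embed :: "'n \<Rightarrow> (1 \<Rightarrow> nat) \<Rightarrow> ('n::finite \<Rightarrow> nat)" where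
  "index_embed i0 \<beta> = (\<lambda>i. if i = i0 then \<beta> 1 else 0)"

lemma inj_index_embed: "inj (index_embed i0)"
proof (rule injI)
  fix \<beta> \<beta>' :: "1 \<Rightarrow> nat" assume "index_embed i0 \<beta> = index_embed i0 \<beta>'"
  then have "\<beta> 1 = \<beta>' 1" unfolding index_embed_def by metis
  then show "\<beta> = \<beta>'" by (metis ext num1_eq1)
qed

lemma range_index_embed: "\<alpha> \<in> range (index_embed i0) \<longleftrightarrow> (\<forall>i. i \<noteq> i0 \<longrightarrow> \<alpha> i = 0)"
proof
  assume "\<forall>i. i \<noteq> i0 \<longrightarrow> \<alpha> i = 0"
  then have "\<alpha> = index_embed i0 (\<lambda>_. \<alpha> i0)" unfolding index_embed_def by auto
  then show "\<alpha> \<in> range (index_embed i0)" by blast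
qed (auto simp: index_embed_def)

lemma index_embed_zero: "index_embed i0 (\<lambda>_. 0) = (\<lambda>_. 0)"
  unfolding index_embed_def by auto

lemma prod_axis_power:
  fixes c :: "'a::comm_semiring_1"
  shows "(\<Prod>i\<in>(UNIV::'n::finite set). (if i = i0 then c else 0) ^ \<alpha> i)
       = (if \<forall>i. i \<noteq> i0 \<longrightarrow> \<alpha> i = 0 then c ^ \<alpha> i0 else 0)"
proof (cases "\<forall>i. i \<noteq> i0 \<longrightarrow> \<alpha> i = 0")
  case True
  then have "(\<Prod>i\<in>(UNIV::'n set). (if i = i0 then c else 0) ^ \<alpha> i)
      = (\<Prod>i\<in>(UNIV::'n set). if i = i0 then c ^ \<alpha> i0 else 1)"
    by (intro prod.cong) auto
  then show ?thesis using True by (simp add: prod.delta)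
next
  case False
  then obtain j where "j \<noteq> i0" "\<alpha> j \<noteq> 0" by blast
  then have "(\<Prod>i\<in>(UNIV::'n set). (if i = i0 then c else 0) ^ \<alpha> i) = 0"
    by (intro prod_zero) (auto intro!: bexI[of _ j] simp: zero_power)
  then show ?thesis using False by auto
qed

lemma monom_axis_embed:
  "monom (axis_embed i0 v) \<alpha> = (if \<forall>i. i \<noteq> i0 \<longrightarrow> \<alpha> i = 0 then (v $ 1) ^ \<alpha> i0 else 0)"
  unfolding monom_def axis_embed_def by (simp add: prod_axis_power)

lemma monom_axis_embed_index_embed: "monom (axis_embed i0 v) (index_embed i0 \<beta>) = monom v \<beta>"
  by (simp add: monom_axis_embed monom_1 index_embed_def)

lemma rmonom_axis:
  "rmonom (\<chi> i. if i = i0 then x else 0) \<alpha> = (if \<forall>i. i \<noteq> i0 \<longrightarrow> \<alpha> i = 0 then x ^ \<alpha> i0 else 0)"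
  unfolding rmonom_def by (simp add: prod_axis_power)

lemma has_sum_index_embed:
  fixes h :: "('n::finite \<Rightarrow> nat) \<Rightarrow> 'v::{comm_monoid_add,topological_space}"
  assumes "\<And>\<alpha>. \<alpha> \<notin> range (index_embed i0) \<Longrightarrow> h \<alpha> = 0"
  shows "(h has_sum s) UNIV \<longleftrightarrow> ((\<lambda>\<beta>. h (index_embed i0 \<beta>)) has_sum s) UNIV"
proof -
  have "(h has_sum s) UNIV \<longleftrightarrow> (h has_sum s) (range (index_embed i0))"
    by (rule has_sum_cong_neutral) (use assms in auto)
  also have "\<dots> \<longleftrightarrow> ((h \<circ> index_embed i0) has_sum s) UNIV"
    by (rule has_sum_reindex[OF inj_index_embed])
  finally show ?thesis by (simp add: comp_def)
qed

lemma axis_embed_in_unit_ball_N: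
  fixes N :: "complex ^ 'n::finite \<Rightarrow> real"
  assumes N: "is_cnorm N" "normalized_1_unconditional N" and v: "v \<in> unit_disc1"
  shows "axis_embed i0 v \<in> unit_ball_N N"
proof -
  have "axis_embed i0 v = (v $ 1) *s axis i0 1" by (simp add: axis_embed_def vec_eq_iff axis_def)
  then show ?thesis
    using v is_cnorm_scale_axis[OF N] unfolding unit_ball_N_def unit_disc1_def by simp
qed

lemma ph_rep_axis_restriction:
  fixes N :: "complex ^ 'n::finite \<Rightarrow> real"
  assumes N: "is_cnorm N" "normalized_1_unconditional N"
    and f: "ph_rep J (unit_ball_N N) f a b"
  shows "ph_rep J unit_disc1 (f \<circ> axis_embed i0) (a \<circ> index_embed i0) (b \<circ> index_embed i0)"
  unfolding ph_rep_def
proof (intro conjI allI ballI)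
  show "(a \<circ> index_embed i0) \<beta> \<in> Bop J" "(b \<circ> index_embed i0) \<beta> \<in> Bop J" for \<beta>
    using f unfolding ph_rep_def by auto
  show "(b \<circ> index_embed i0) (\<lambda>_. 0) = 0" using f unfolding ph_rep_def by (simp add: index_embed_zero)
  fix v assume "v \<in> unit_disc1"
  then have z: "axis_embed i0 v \<in> unit_ball_N N" by (rule axis_embed_in_unit_ball_N[OF N])
  let ?A = "\<lambda>\<alpha>. cscale J (monom (axis_embed i0 v) \<alpha>) (a \<alpha>)"
  let ?B = "\<lambda>\<alpha>. cscale J (cnj (monom (axis_embed i0 v) \<alpha>)) (hadj (b \<alpha>))"
  have A: "(?A has_sum infsum ?A UNIV) UNIV" and B: "(?B has_sum infsum ?B UNIV) UNIV"
    and fz: "f (axis_embed i0 v) = infsum ?A UNIV + infsum ?B UNIV"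
    using f z unfolding ph_rep_def by auto
  have "?A \<alpha> = 0" "?B \<alpha> = 0" if "\<alpha> \<notin> range (index_embed i0)" for \<alpha>
    using that by (auto simp: monom_axis_embed range_index_embed)
  then have "((\<lambda>\<beta>. ?A (index_embed i0 \<beta>)) has_sum infsum ?A UNIV) UNIV"
    and "((\<lambda>\<beta>. ?B (index_embed i0 \<beta>)) has_sum infsum ?B UNIV) UNIV"
    using A B has_sum_index_embed[of i0 ?A] has_sum_index_embed[of i0 ?B] by blast+
  then have hA: "((\<lambda>\<beta>. cscale J (monom v \<beta>) ((a \<circ> index_embed i0) \<beta>)) has_sum infsum ?A UNIV) UNIV"
    and hB: "((\<lambda>\<beta>. cscale J (cnj (monom v \<beta>)) (hadj ((b \<circ> index_embed i0) \<beta>))) has_sum infsum ?B UNIV) UNIV"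
    unfolding comp_def monom_axis_embed_index_embed .
  show "(\<lambda>\<beta>. cscale J (monom v \<beta>) ((a \<circ> index_embed i0) \<beta>)) summable_on UNIV"
    "(\<lambda>\<beta>. cscale J (cnj (monom v \<beta>)) (hadj ((b \<circ> index_embed i0) \<beta>))) summable_on UNIV"
    using hA hB unfolding summable_on_def by blast+
  show "(f \<circ> axis_embed i0) v = (\<Sum>\<^sub>\<infinity>\<beta>. cscale J (monom v \<beta>) ((a \<circ> index_embed i0) \<beta>))
      + (\<Sum>\<^sub>\<infinity>\<beta>. cscale J (cnj (monom v \<beta>)) (hadj ((b \<circ> index_embed i0) \<beta>)))"
    using fz infsumI[OF hA] infsumI[OF hB] by simp
qed

lemma AP_admissible_axis:
  fixes N :: "complex ^ 'n::finite \<Rightarrow> real"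
  assumes N: "is_cnorm N" "normalized_1_unconditional N" and p: "1 \<le> p" and lam: "0 \<le> lam"
    and R: "R_admissible J U lam unit_disc1 p \<rho>" and x: "0 \<le> x" "x < \<rho>"
  shows "AP_admissible J U lam (unit_ball_N N) p (\<chi> i. if i = i0 then x else 0)"
  unfolding AP_admissible_def
proof (intro allI impI, elim conjE)
  fix f a b assume f: "ph_rep J (unit_ball_N N) f a b" and fb: "bounded (f ` unit_ball_N N)"
  let ?g = "f \<circ> axis_embed i0"
  have gb: "bounded (?g ` unit_disc1)"
    by (rule bounded_subset[OF fb]) (auto intro: axis_embed_in_unit_ball_N[OF N])
  have sup: "supnorm unit_disc1 ?g \<le> supnorm (unit_ball_N N) f"
    using zero_in_unit_disc1 axis_embed_in_unit_ball_N[OF N] by (intro supnorm_le_supnorm_comp[OF fb]) auto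
  define tg where "tg \<beta> = (norm (U (a (index_embed i0 \<beta>))) powr p + norm (U (b (index_embed i0 \<beta>))) powr p)
          * cmod (monom (vec1 (complex_of_real x)) \<beta>) powr p" for \<beta>
  define tf where "tf \<alpha> = (norm (U (a \<alpha>)) powr p + norm (U (b \<alpha>)) powr p)
          * rmonom (\<chi> i. if i = i0 then x else 0) \<alpha> powr p" for \<alpha>
  have "nnsum_le (\<lambda>\<beta>. (norm (U ((a \<circ> index_embed i0) \<beta>)) powr p + norm (U ((b \<circ> index_embed i0) \<beta>)) powr p)
          * cmod (monom (vec1 (complex_of_real x)) \<beta>) powr p) (lam powr p * supnorm unit_disc1 ?g powr p)"
    using R ph_rep_axis_restriction[OF N f] gb vec1_of_real_in_scaled_disc[OF x]
    unfolding R_admissible_def by blast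
  then have "nnsum_le tg (lam powr p * supnorm unit_disc1 ?g powr p)"
    unfolding tg_def comp_def .
  then have tg_le: "sum tg G \<le> lam powr p * supnorm unit_disc1 ?g powr p" if "finite G" for G
    using that by (subst (asm) nnsum_le_iff) (auto simp: tg_def)
  have tf0: "tf \<alpha> = 0" if "\<alpha> \<notin> range (index_embed i0)" for \<alpha>
    using that unfolding tf_def by (auto simp: rmonom_axis range_index_embed)
  have tf_embed: "tf (index_embed i0 \<beta>) = tg \<beta>" for \<beta>
    using x by (simp add: tf_def tg_def rmonom_axis index_embed_def monom_1 norm_power)
  have "sum tf F \<le> lam powr p * supnorm (unit_ball_N N) f powr p" if F: "finite F" for F
  proof -
    have "sum tf F = sum tf (index_embed i0 ` (index_embed i0 -` F))"
      by (rule sum.mono_neutral_right) (use F tf0 in auto)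
    also have "\<dots> = sum tg (index_embed i0 -` F)"
      by (subst sum.reindex) (auto intro: inj_on_subset[OF inj_index_embed] simp: tf_embed)
    also have "\<dots> \<le> lam powr p * supnorm unit_disc1 ?g powr p"
      by (rule tg_le) (rule finite_vimageI[OF F inj_index_embed])
    also have "\<dots> \<le> lam powr p * supnorm (unit_ball_N N) f powr p"
      using sup supnorm_nonneg[OF gb zero_in_unit_disc1] p by (intro mult_left_mono powr_mono2) auto
    finally show ?thesis .
  qed
  then show "nnsum_le (\<lambda>\<alpha>. (norm (U (a \<alpha>)) powr p + norm (U (b \<alpha>)) powr p)
          * rmonom (\<chi> i. if i = i0 then x else 0) \<alpha> powr p) (lam powr p * supnorm (unit_ball_N N) f powr p)"
    by (subst nnsum_le_iff) (auto simp: tf_def)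
qed

lemma Rlam_le_card_mult_APlam:
  fixes N :: "complex ^ 'n::finite \<Rightarrow> real"
  assumes hJ: "hilbert_cstruct J" and U: "bounded_clinear_U J Jy U" and T: "T \<in> Bop J" "U T \<noteq> 0"
    and lam: "opnorm_U J U \<le> lam" "0 \<le> lam" and p: "1 \<le> p"
    and N: "is_cnorm N" "normalized_1_unconditional N"
  shows "Rlam J U lam unit_disc1 p \<le> real CARD('n) * APlam J U lam (unit_ball_N N) p"
proof -
  fix i0 :: 'n
  let ?n = "real CARD('n)" and ?APs = "AP_means J U lam (unit_ball_N N) p"
  have p0: "0 < p" using p by simp
  have bdd: "bdd_above ?APs" by (rule bdd_above_AP_means[OF hJ U T p0 lam(2) N])
  have AP0: "0 \<le> Sup ?APs"
    using zero_in_AP_means[OF U lam p0 zero_in_unit_ball_N[OF N(1)]] bdd by (rule cSup_upper)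
  have "Sup (R_radii J U lam unit_disc1 p) \<le> ?n * Sup ?APs"
  proof (rule cSup_least)
    show "R_radii J U lam unit_disc1 p \<noteq> {}"
      using zero_in_R_radii[OF U lam p0 zero_in_unit_disc1] by auto
    fix \<rho> assume "\<rho> \<in> R_radii J U lam unit_disc1 p"
    then have R: "R_admissible J U lam unit_disc1 p \<rho>" by (simp add: R_radii_def)
    show "\<rho> \<le> ?n * Sup ?APs"
    proof (rule dense_le)
      fix x assume x: "x < \<rho>"
      show "x \<le> ?n * Sup ?APs"
      proof (cases "0 \<le> x")
        case True
        let ?r = "\<chi> i. if i = i0 then x else 0"
        have "x / ?n \<in> ?APs"
          unfolding AP_means_def using AP_admissible_axis[OF N p lam(2) R True x] True
          by (intro CollectI exI[of _ ?r]) (simp add: sum.delta)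
        then have "x / ?n \<le> Sup ?APs" using bdd by (rule cSup_upper)
        then show ?thesis by (simp add: divide_le_eq mult.commute)
      next
        case False
        moreover have "0 \<le> ?n * Sup ?APs" using AP0 by simp
        ultimately show ?thesis by linarith
      qed
    qed
  qed
  then show ?thesis unfolding Rlam_eq APlam_eq .
qed

section \<open>Composition with the normalized coordinate sum\<close>

definition index1 :: "nat \<Rightarrow> (1 \<Rightarrow> nat)" where
  "index1 k = (\<lambda>_. k)"

lemma bij_index1: "bij index1"
proof (rule bijI)
  show "inj index1" unfolding index1_def by (rule injI) metis
  have "\<beta> = index1 (\<beta> 1)" for \<beta> :: "1 \<Rightarrow> nat" unfolding index1_def by (metis ext num1_eq1)
  then show "surj index1" by (rule surjI[of index1 "\<lambda>\<beta>. \<beta> 1", OF sym])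
qed

lemma has_sum_index1_iff: "(h has_sum s) UNIV \<longleftrightarrow> ((\<lambda>k. h (index1 k)) has_sum s) UNIV"
  using has_sum_reindex_bij_betw[OF bij_index1, of h s] by simp

lemma monom_vec1_index1: "monom (vec1 u) (index1 k) = u ^ k"
  by (simp add: monom_1 index1_def)

lemma deg_index1: "index1 (deg (\<lambda>_::'n::finite. 0)) = (\<lambda>_. 0)"
  by (simp add: deg_def index1_def)

text \<open>Abel's lemma: convergence at \<open>w\<^sub>0\<close> gives absolute convergence on smaller radii.\<close>

lemma summable_norm_mult_power:
  assumes hJ: "hilbert_cstruct J"
    and s0: "(\<lambda>k. cscale J (complex_of_real (w0 ^ k)) (A k)) summable_on UNIV"
    and t: "0 \<le> t" "t < w0"
  shows "summable (\<lambda>k. norm (A k) * t ^ k)"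
proof -
  have w0: "0 < w0" using t by linarith
  have "(\<lambda>k. cscale J (complex_of_real (w0 ^ k)) (A k)) \<longlonglongrightarrow> 0"
    by (rule summable_LIMSEQ_zero[OF summable_on_imp_summable[OF s0]])
  then have "Bseq (\<lambda>k. cscale J (complex_of_real (w0 ^ k)) (A k))"
    by (intro convergent_imp_Bseq) (auto simp: convergent_def)
  then obtain C where C: "\<And>k. norm (cscale J (complex_of_real (w0 ^ k)) (A k)) \<le> C"
    unfolding Bseq_def by blast
  have CA: "w0 ^ k * norm (A k) \<le> C" for k
    using C[of k] w0 by (simp add: norm_cscale[OF hJ] norm_power)
  show ?thesis
  proof (rule summable_comparison_test')
    show "summable (\<lambda>k. C * (t / w0) ^ k)"
      using t w0 by (intro summable_mult summable_geometric) simp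
    fix k :: nat
    have "norm (norm (A k) * t ^ k) = (w0 ^ k * norm (A k)) * (t / w0) ^ k"
      using t w0 by (simp add: power_divide)
    also have "\<dots> \<le> C * (t / w0) ^ k"
      using CA[of k] t w0 by (intro mult_right_mono) auto
    finally show "norm (norm (A k) * t ^ k) \<le> C * (t / w0) ^ k" .
  qed
qed

lemma has_sum_multinomial_expansion:
  fixes x :: "complex ^ 'n::finite"
  assumes hJ: "hilbert_cstruct J"
    and s0: "(\<lambda>k. cscale J (complex_of_real (w0 ^ k)) (A k)) summable_on UNIV"
    and t: "(\<Sum>i\<in>UNIV. cmod (x $ i)) < w0"
    and L: "((\<lambda>k. cscale J ((\<Sum>i\<in>UNIV. x $ i) ^ k) (A k)) has_sum L) UNIV"
  shows "((\<lambda>\<alpha>. cscale J (of_nat (multinomial_coeff \<alpha>) * monom x \<alpha>) (A (deg \<alpha>))) has_sum L) UNIV"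
proof (rule has_sum_by_degree)
  show "summable (\<lambda>k. norm (A k) * (\<Sum>i\<in>UNIV. cmod (x $ i)) ^ k)"
    by (rule summable_norm_mult_power[OF hJ s0 _ t]) (simp add: sum_nonneg)
  show "(\<lambda>k. cscale J ((\<Sum>i\<in>UNIV. x $ i) ^ k) (A k)) sums L"
    by (rule has_sum_imp_sums[OF L])
next
  fix k
  have "(\<Sum>\<alpha>\<in>indices_of_deg k. norm (cscale J (of_nat (multinomial_coeff \<alpha>) * monom x \<alpha>) (A (deg \<alpha>))))
      = (\<Sum>\<alpha>\<in>indices_of_deg k. norm (A k) * (of_nat (multinomial_coeff \<alpha>) * (\<Prod>i\<in>UNIV. cmod (x $ i) ^ \<alpha> i)))"
    by (intro sum.cong refl) (auto simp: indices_of_deg_def norm_cscale[OF hJ] norm_mult norm_monom)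
  also have "\<dots> = norm (A k) * (\<Sum>i\<in>UNIV. cmod (x $ i)) ^ k"
    by (simp add: multinomial_theorem[of "\<lambda>i. cmod (x $ i)"] sum_distrib_left)
  finally show "(\<Sum>\<alpha>\<in>indices_of_deg k. norm (cscale J (of_nat (multinomial_coeff \<alpha>) * monom x \<alpha>) (A (deg \<alpha>))))
      \<le> norm (A k) * (\<Sum>i\<in>UNIV. cmod (x $ i)) ^ k" by simp
next
  fix k
  have "(\<Sum>\<alpha>\<in>indices_of_deg k. cscale J (of_nat (multinomial_coeff \<alpha>) * monom x \<alpha>) (A (deg \<alpha>)))
      = cscale J (\<Sum>\<alpha>\<in>indices_of_deg k. of_nat (multinomial_coeff \<alpha>) * monom x \<alpha>) (A k)"
    by (auto simp: indices_of_deg_def cscale_sum_left intro!: sum.cong)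
  also have "(\<Sum>\<alpha>\<in>indices_of_deg k. of_nat (multinomial_coeff \<alpha>) * monom x \<alpha>) = (\<Sum>i\<in>UNIV. x $ i) ^ k"
    unfolding monom_def by (simp add: multinomial_theorem[of "\<lambda>i. x $ i"])
  finally show "(\<Sum>\<alpha>\<in>indices_of_deg k. cscale J (of_nat (multinomial_coeff \<alpha>) * monom x \<alpha>) (A (deg \<alpha>)))
      = cscale J ((\<Sum>i\<in>UNIV. x $ i) ^ k) (A k)" .
qed

definition sum_form :: "real \<Rightarrow> complex ^ 'n::finite \<Rightarrow> complex ^ 1" where
  "sum_form c z = vec1 ((\<Sum>i\<in>UNIV. z $ i) / complex_of_real c)"

text \<open>The coefficients of \<open>g \<circ> sum_form c\<close> in terms of those of \<open>g\<close>.\<close>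

definition expand_coeffs ::
  "real \<Rightarrow> ((1 \<Rightarrow> nat) \<Rightarrow> 'a::real_vector) \<Rightarrow> ('n::finite \<Rightarrow> nat) \<Rightarrow> 'a" where
  "expand_coeffs c a \<alpha> = (real (multinomial_coeff \<alpha>) / c ^ deg \<alpha>) *\<^sub>R a (index1 (deg \<alpha>))"

lemma cscale_expand_coeffs:
  assumes "c \<noteq> 0"
  shows "cscale J (monom z \<alpha>) (expand_coeffs c a \<alpha>)
       = cscale J (of_nat (multinomial_coeff \<alpha>) * monom (\<chi> i. z $ i / complex_of_real c) \<alpha>) (a (index1 (deg \<alpha>)))"
  using assms by (simp add: expand_coeffs_def cscale_scaleR monom_divide field_simps)

lemma norm_U_expand_coeffs:
  assumes U: "bounded_clinear_U J Jy U" and h: "h (index1 (deg \<alpha>)) \<in> Bop J" and c: "0 < c"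
  shows "norm (U (expand_coeffs c h \<alpha>))
       = real (multinomial_coeff \<alpha>) / c ^ deg \<alpha> * norm (U (h (index1 (deg \<alpha>))))"
  using c by (simp add: expand_coeffs_def bounded_clinear_U_scaleR[OF U h])

lemma sum_form_in_unit_disc1:
  fixes N :: "complex ^ 'n::finite \<Rightarrow> real"
  assumes N: "is_cnorm N" "normalized_1_unconditional N" and z: "z \<in> unit_ball_N N"
  shows "sum_form (id_to_l1_norm N) z \<in> unit_disc1"
proof -
  have "cmod (\<Sum>i\<in>UNIV. z $ i) \<le> (\<Sum>i\<in>UNIV. cmod (z $ i))" by (rule norm_sum)
  also have "\<dots> < id_to_l1_norm N" by (rule l1_norm_lt_id_to_l1_norm[OF N z])
  finally show ?thesis
    using id_to_l1_norm_ge_1[OF N] unfolding sum_form_def unit_disc1_def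
    by (simp add: norm_divide divide_less_eq)
qed

lemma has_sum_expand_coeffs:
  fixes N :: "complex ^ 'n::finite \<Rightarrow> real"
  assumes hJ: "hilbert_cstruct J" and N: "is_cnorm N" "normalized_1_unconditional N"
    and g: "ph_rep J unit_disc1 g a b" and c: "c = id_to_l1_norm N" and z: "z \<in> unit_ball_N N"
  shows "((\<lambda>\<alpha>. cscale J (monom z \<alpha>) (expand_coeffs c a \<alpha>))
           has_sum (\<Sum>\<^sub>\<infinity>\<beta>. cscale J (monom (sum_form c z) \<beta>) (a \<beta>))) UNIV"
    and "((\<lambda>\<alpha>. cscale J (cnj (monom z \<alpha>)) (hadj (expand_coeffs c b \<alpha>)))
           has_sum (\<Sum>\<^sub>\<infinity>\<beta>. cscale J (cnj (monom (sum_form c z) \<beta>)) (hadj (b \<beta>)))) UNIV"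
proof -
  have c1: "1 \<le> c" unfolding c by (rule id_to_l1_norm_ge_1[OF N])
  have disc: "sum_form c z \<in> unit_disc1" unfolding c by (rule sum_form_in_unit_disc1[OF N z])
  define x where "x = (\<chi> i. z $ i / complex_of_real c)"
  define x' where "x' = (\<chi> i. cnj (z $ i) / complex_of_real c)"
  define t where "t = (\<Sum>i\<in>UNIV. cmod (z $ i)) / c"
  have tx: "(\<Sum>i\<in>UNIV. cmod (x $ i)) = t" "(\<Sum>i\<in>UNIV. cmod (x' $ i)) = t"
    unfolding t_def x_def x'_def using c1 by (simp_all add: norm_divide sum_divide_distrib)
  have "t < 1"
    using l1_norm_lt_id_to_l1_norm[OF N z] c1 unfolding t_def c by (simp add: divide_less_eq)
  have t0: "0 \<le> t" unfolding t_def using c1 by (simp add: sum_nonneg)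
  have w: "sum_form c z $ 1 = (\<Sum>i\<in>UNIV. x $ i)" "cnj (sum_form c z $ 1) = (\<Sum>i\<in>UNIV. x' $ i)"
    unfolding sum_form_def x_def x'_def by (simp_all add: sum_divide_distrib cnj_sum)
  define w0 where "w0 = (t + 1) / 2"
  have w0: "t < w0" "vec1 (complex_of_real w0) \<in> unit_disc1"
    using t0 \<open>t < 1\<close> unfolding w0_def by (auto intro: vec1_in_unit_disc1)
  have "(\<lambda>\<beta>. cscale J (monom (vec1 (complex_of_real w0)) \<beta>) (a \<beta>)) summable_on UNIV"
    "(\<lambda>\<beta>. cscale J (cnj (monom (vec1 (complex_of_real w0)) \<beta>)) (hadj (b \<beta>))) summable_on UNIV"
    using g w0(2) unfolding ph_rep_def by auto
  then have sa: "(\<lambda>k. cscale J (complex_of_real (w0 ^ k)) (a (index1 k))) summable_on UNIV"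
    and sb: "(\<lambda>k. cscale J (complex_of_real (w0 ^ k)) (hadj (b (index1 k)))) summable_on UNIV"
    unfolding summable_on_def has_sum_index1_iff by (simp_all add: monom_vec1_index1)
  have "((\<lambda>k. cscale J ((\<Sum>i\<in>UNIV. x $ i) ^ k) (a (index1 k)))
          has_sum (\<Sum>\<^sub>\<infinity>\<beta>. cscale J (monom (sum_form c z) \<beta>) (a \<beta>))) UNIV"
    and "((\<lambda>k. cscale J ((\<Sum>i\<in>UNIV. x' $ i) ^ k) (hadj (b (index1 k))))
          has_sum (\<Sum>\<^sub>\<infinity>\<beta>. cscale J (cnj (monom (sum_form c z) \<beta>)) (hadj (b \<beta>)))) UNIV"
    using g disc unfolding ph_rep_def
    by (auto simp: has_sum_index1_iff monom_1 index1_def w[symmetric] dest!: has_sum_infsum)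
  from this(1)[THEN has_sum_multinomial_expansion[OF hJ sa, rotated]]
       this(2)[THEN has_sum_multinomial_expansion[OF hJ sb, rotated]]
  have A: "((\<lambda>\<alpha>. cscale J (of_nat (multinomial_coeff \<alpha>) * monom x \<alpha>) (a (index1 (deg \<alpha>))))
            has_sum (\<Sum>\<^sub>\<infinity>\<beta>. cscale J (monom (sum_form c z) \<beta>) (a \<beta>))) UNIV"
    and B: "((\<lambda>\<alpha>. cscale J (of_nat (multinomial_coeff \<alpha>) * monom x' \<alpha>) (hadj (b (index1 (deg \<alpha>)))))
            has_sum (\<Sum>\<^sub>\<infinity>\<beta>. cscale J (cnj (monom (sum_form c z) \<beta>)) (hadj (b \<beta>)))) UNIV"
    using tx w0(1) by simp_all
  have "cnj (monom z \<alpha>) = monom (\<chi> i. (\<chi> j. cnj (z $ j)) $ i) \<alpha>" for \<alpha>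
    by (simp add: cnj_monom)
  then have "cscale J (cnj (monom z \<alpha>)) (hadj (expand_coeffs c b \<alpha>))
      = cscale J (of_nat (multinomial_coeff \<alpha>) * monom x' \<alpha>) (hadj (b (index1 (deg \<alpha>))))" for \<alpha>
    using cscale_expand_coeffs[where z="\<chi> j. cnj (z $ j)" and a="hadj \<circ> b" and J=J and \<alpha>=\<alpha>] c1
    by (simp add: x'_def expand_coeffs_def hadj_scaleR)
  moreover have "cscale J (monom z \<alpha>) (expand_coeffs c a \<alpha>)
      = cscale J (of_nat (multinomial_coeff \<alpha>) * monom x \<alpha>) (a (index1 (deg \<alpha>)))" for \<alpha>
    unfolding x_def using c1 by (intro cscale_expand_coeffs) simp
  ultimately show "((\<lambda>\<alpha>. cscale J (monom z \<alpha>) (expand_coeffs c a \<alpha>))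
           has_sum (\<Sum>\<^sub>\<infinity>\<beta>. cscale J (monom (sum_form c z) \<beta>) (a \<beta>))) UNIV"
    and "((\<lambda>\<alpha>. cscale J (cnj (monom z \<alpha>)) (hadj (expand_coeffs c b \<alpha>)))
           has_sum (\<Sum>\<^sub>\<infinity>\<beta>. cscale J (cnj (monom (sum_form c z) \<beta>)) (hadj (b \<beta>)))) UNIV"
    using A B by simp_all
qed

lemma ph_rep_compose_sum_form:
  fixes N :: "complex ^ 'n::finite \<Rightarrow> real"
  assumes hJ: "hilbert_cstruct J" and N: "is_cnorm N" "normalized_1_unconditional N"
    and g: "ph_rep J unit_disc1 g a b" and c: "c = id_to_l1_norm N"
  shows "ph_rep J (unit_ball_N N) (g \<circ> sum_form c) (expand_coeffs c a) (expand_coeffs c b)"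
  unfolding ph_rep_def
proof (intro conjI allI ballI)
  show "expand_coeffs c a \<alpha> \<in> Bop J" "expand_coeffs c b \<alpha> \<in> Bop J" for \<alpha>
    using g unfolding ph_rep_def expand_coeffs_def by (auto intro: Bop_scaleR)
  show "expand_coeffs c b (\<lambda>_. 0) = 0"
    using g unfolding ph_rep_def expand_coeffs_def by (simp add: deg_index1)
  fix z assume z: "z \<in> unit_ball_N N"
  note hs = has_sum_expand_coeffs[OF hJ N g c z]
  have "sum_form c z \<in> unit_disc1" unfolding c by (rule sum_form_in_unit_disc1[OF N z])
  show "(\<lambda>\<alpha>. cscale J (monom z \<alpha>) (expand_coeffs c a \<alpha>)) summable_on UNIV"
    "(\<lambda>\<alpha>. cscale J (cnj (monom z \<alpha>)) (hadj (expand_coeffs c b \<alpha>))) summable_on UNIV"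
    using hs unfolding summable_on_def by blast+
  show "(g \<circ> sum_form c) z = (\<Sum>\<^sub>\<infinity>\<alpha>. cscale J (monom z \<alpha>) (expand_coeffs c a \<alpha>))
      + (\<Sum>\<^sub>\<infinity>\<alpha>. cscale J (cnj (monom z \<alpha>)) (hadj (expand_coeffs c b \<alpha>)))"
    using g hs \<open>sum_form c z \<in> unit_disc1\<close> unfolding ph_rep_def by (simp add: infsumI)
qed

lemma nnsum_le_index1_by_degree:
  fixes tf :: "('n::finite \<Rightarrow> nat) \<Rightarrow> real" and tg :: "(1 \<Rightarrow> nat) \<Rightarrow> real"
  assumes "\<And>\<beta>. 0 \<le> tg \<beta>" "\<And>\<alpha>. 0 \<le> tf \<alpha>"
    and le: "\<And>k. tg (index1 k) \<le> sum tf (indices_of_deg k)" and tf: "nnsum_le tf B"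
  shows "nnsum_le tg B"
  unfolding nnsum_le_iff[OF assms(1)]
proof (intro allI impI)
  fix F :: "(1 \<Rightarrow> nat) set" assume F: "finite F"
  define K where "K = index1 -` F"
  have K: "finite K" unfolding K_def by (rule finite_vimageI[OF F bij_is_inj[OF bij_index1]])
  have "F = index1 ` K" unfolding K_def using bij_index1 by (auto simp: bij_def surj_def image_iff)
  then have "sum tg F = (\<Sum>k\<in>K. tg (index1 k))"
    using bij_is_inj[OF bij_index1] by (simp add: sum.reindex inj_on_subset)
  also have "\<dots> \<le> (\<Sum>k\<in>K. sum tf (indices_of_deg k))" by (intro sum_mono le)
  also have "\<dots> = sum tf (\<Union>k\<in>K. indices_of_deg k)"
    by (rule sum.UNION_disjoint[symmetric]) (use finite_indices_of_deg K in \<open>auto simp: indices_of_deg_def\<close>)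
  also have "\<dots> \<le> B"
    using tf K finite_indices_of_deg unfolding nnsum_le_iff[OF assms(2)] by blast
  finally show "sum tg F \<le> B" .
qed

text \<open>The degree-\<open>k\<close> estimate: \<open>\<rho>\<^sup>p \<le> (\<Sum> r\<^sub>i\<^sup>p) / c\<^sup>p\<close> by the power mean inequality, then the
  multinomial theorem and \<open>m \<le> m\<^sup>p\<close>.\<close>

lemma powr_radius_le_multinomial_sum:
  fixes r :: "real ^ 'n::finite"
  assumes p: "1 \<le> p" and c: "1 \<le> c" and r: "\<And>i. 0 \<le> r $ i" and D: "0 \<le> D"
    and q: "0 \<le> q" "q \<le> \<rho>"
    and \<rho>: "\<rho> = real CARD('n) powr (1 / p) * ((\<Sum>i\<in>UNIV. r $ i) / real CARD('n)) / c"
  shows "D * (q powr p) ^ k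
       \<le> (\<Sum>\<alpha>\<in>indices_of_deg k. (real (multinomial_coeff \<alpha>) / c ^ k) powr p * D * rmonom r \<alpha> powr p)"
proof -
  define s where "s = (\<Sum>i\<in>UNIV. r $ i) / real CARD('n)"
  define n where "n = real CARD('n)"
  have s0: "0 \<le> s" unfolding s_def using r by (simp add: sum_nonneg)
  have n0: "0 < n" unfolding n_def by simp
  have cp: "0 < c powr p" using c by simp
  have "\<rho> = n powr (1 / p) * s / c" unfolding \<rho> s_def n_def ..
  then have "\<rho> powr p = (n powr (1 / p)) powr p * s powr p / c powr p"
    using n0 s0 c by (simp add: powr_divide powr_mult)
  also have "(n powr (1 / p)) powr p = n" using p n0 by (simp add: powr_powr)
  finally have \<rho>p: "\<rho> powr p = n * s powr p / c powr p" .
  have "D * (q powr p) ^ k \<le> D * (\<rho> powr p) ^ k"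
    using q p D by (intro mult_left_mono power_mono powr_mono2) auto
  also have "\<dots> = D / (c powr p) ^ k * (n * s powr p) ^ k"
    unfolding \<rho>p by (simp add: power_divide)
  also have "\<dots> \<le> D / (c powr p) ^ k * (\<Sum>i\<in>UNIV. r $ i powr p) ^ k"
  proof (intro mult_left_mono power_mono)
    show "n * s powr p \<le> (\<Sum>i\<in>UNIV. r $ i powr p)"
      using power_mean_le[of UNIV "\<lambda>i. r $ i" p] r p unfolding n_def s_def by simp
  qed (use D cp s0 n0 in auto)
  also have "\<dots> = (\<Sum>\<alpha>\<in>indices_of_deg k. real (multinomial_coeff \<alpha>) / (c powr p) ^ k * D * rmonom r \<alpha> powr p)"
    by (simp add: multinomial_theorem[of "\<lambda>i. r $ i powr p"] sum_distrib_left rmonom_powr[OF r]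
        algebra_simps)
  also have "\<dots> \<le> (\<Sum>\<alpha>\<in>indices_of_deg k. (real (multinomial_coeff \<alpha>) / c ^ k) powr p * D * rmonom r \<alpha> powr p)"
  proof (intro sum_mono mult_right_mono)
    fix \<alpha> :: "'n \<Rightarrow> nat"
    have "(real (multinomial_coeff \<alpha>) / c ^ k) powr p = real (multinomial_coeff \<alpha>) powr p / (c powr p) ^ k"
      using c by (simp add: powr_divide powr_power_swap)
    then show "real (multinomial_coeff \<alpha>) / (c powr p) ^ k \<le> (real (multinomial_coeff \<alpha>) / c ^ k) powr p"
      using self_le_powr_nat[OF p, of "multinomial_coeff \<alpha>"] cp by (simp add: divide_right_mono)
  qed (use D in auto)
  finally show ?thesis .
qed

lemma R_admissible_of_AP_admissible:
  fixes N :: "complex ^ 'n::finite \<Rightarrow> real"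
  assumes hJ: "hilbert_cstruct J" and U: "bounded_clinear_U J Jy U"
    and N: "is_cnorm N" "normalized_1_unconditional N" and p: "1 \<le> p" and lam: "0 \<le> lam"
    and r: "\<forall>i. 0 \<le> r $ i" "AP_admissible J U lam (unit_ball_N N) p r"
    and \<rho>: "\<rho> = real CARD('n) powr (1 / p) * ((\<Sum>i\<in>UNIV. r $ i) / real CARD('n)) / id_to_l1_norm N"
  shows "R_admissible J U lam unit_disc1 p \<rho>"
  unfolding R_admissible_def
proof (intro allI impI ballI, elim conjE)
  fix g a b z
  assume g: "ph_rep J unit_disc1 g a b" and gb: "bounded (g ` unit_disc1)"
    and z: "z \<in> (\<lambda>w. \<rho> *\<^sub>R w) ` unit_disc1"
  define c where "c = id_to_l1_norm N"
  have c1: "1 \<le> c" unfolding c_def by (rule id_to_l1_norm_ge_1[OF N])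
  have \<rho>0: "0 \<le> \<rho>" unfolding \<rho> using c1 r(1) by (simp add: sum_nonneg flip: c_def)
  let ?f = "g \<circ> sum_form c"
  have f: "ph_rep J (unit_ball_N N) ?f (expand_coeffs c a) (expand_coeffs c b)"
    by (rule ph_rep_compose_sum_form[OF hJ N g c_def])
  have disc: "sum_form c z' \<in> unit_disc1" if "z' \<in> unit_ball_N N" for z'
    unfolding c_def by (rule sum_form_in_unit_disc1[OF N that])
  have fb: "bounded (?f ` unit_ball_N N)" using gb disc by (auto intro: bounded_subset)
  have sup: "supnorm (unit_ball_N N) ?f \<le> supnorm unit_disc1 g"
    using zero_in_unit_ball_N[OF N(1)] disc by (intro supnorm_le_supnorm_comp[OF gb]) auto
  define D where "D k = norm (U (a (index1 k))) powr p + norm (U (b (index1 k))) powr p" for k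
  define tf where "tf \<alpha> = (norm (U (expand_coeffs c a \<alpha>)) powr p + norm (U (expand_coeffs c b \<alpha>)) powr p)
      * rmonom r \<alpha> powr p" for \<alpha>
  have "nnsum_le tf (lam powr p * supnorm (unit_ball_N N) ?f powr p)"
    using r(2) f fb unfolding AP_admissible_def tf_def by blast
  moreover have "lam powr p * supnorm (unit_ball_N N) ?f powr p \<le> lam powr p * supnorm unit_disc1 g powr p"
    using sup supnorm_nonneg[OF fb zero_in_unit_ball_N[OF N(1)]] p by (intro mult_left_mono powr_mono2) auto
  ultimately have tf: "nnsum_le tf (lam powr p * supnorm unit_disc1 g powr p)"
    unfolding nnsum_le_def by linarith
  have aB: "a \<beta> \<in> Bop J" "b \<beta> \<in> Bop J" for \<beta> using g unfolding ph_rep_def by auto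
  have tf_eq: "tf \<alpha> = (real (multinomial_coeff \<alpha>) / c ^ k) powr p * D k * rmonom r \<alpha> powr p"
    if "\<alpha> \<in> indices_of_deg k" for \<alpha> k
  proof -
    have k: "deg \<alpha> = k" using that by (simp add: indices_of_deg_def)
    have "norm (U (expand_coeffs c h \<alpha>)) powr p
        = (real (multinomial_coeff \<alpha>) / c ^ k) powr p * norm (U (h (index1 k))) powr p"
      if "h (index1 k) \<in> Bop J" for h
      using norm_U_expand_coeffs[where h=h and \<alpha>=\<alpha>, OF U that[folded k]] c1
      by (simp add: k powr_mult del: times_divide_eq_left)
    then show ?thesis unfolding tf_def D_def using aB by (simp add: algebra_simps)
  qed
  obtain w where w: "w \<in> unit_disc1" "z = \<rho> *\<^sub>R w" using z by blast
  have q: "0 \<le> cmod (z $ 1)" "cmod (z $ 1) \<le> \<rho>"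
    using w \<rho>0 unfolding unit_disc1_def by (auto simp: mult_left_le)
  show "nnsum_le (\<lambda>\<beta>. (norm (U (a \<beta>)) powr p + norm (U (b \<beta>)) powr p) * cmod (monom z \<beta>) powr p)
          (lam powr p * supnorm unit_disc1 g powr p)"
  proof (rule nnsum_le_index1_by_degree[OF _ _ _ tf])
    fix k
    have "(norm (U (a (index1 k))) powr p + norm (U (b (index1 k))) powr p) * cmod (monom z (index1 k)) powr p
        = D k * (cmod (z $ 1) powr p) ^ k"
      by (simp add: D_def monom_1 index1_def norm_power powr_power_swap)
    also have "\<dots> \<le> sum tf (indices_of_deg k)"
      using powr_radius_le_multinomial_sum[OF p c1 _ _ q \<rho>[folded c_def], where D="D k" and k=k] r(1)
      by (simp add: D_def tf_eq cong: sum.cong)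
    finally show "(norm (U (a (index1 k))) powr p + norm (U (b (index1 k))) powr p)
        * cmod (monom z (index1 k)) powr p \<le> sum tf (indices_of_deg k)" .
  qed (simp_all add: tf_def)
qed

lemma APlam_le_id_to_l1_norm_mult_Rlam:
  fixes N :: "complex ^ 'n::finite \<Rightarrow> real"
  assumes hJ: "hilbert_cstruct J" and U: "bounded_clinear_U J Jy U" and T: "T \<in> Bop J" "U T \<noteq> 0"
    and lam: "opnorm_U J U \<le> lam" "0 \<le> lam" and p: "1 \<le> p"
    and N: "is_cnorm N" "normalized_1_unconditional N"
  shows "APlam J U lam (unit_ball_N N) p
       \<le> id_to_l1_norm N * Rlam J U lam unit_disc1 p / real CARD('n) powr (1 / p)"
proof -
  let ?n = "real CARD('n)" and ?c = "id_to_l1_norm N" and ?Rs = "R_radii J U lam unit_disc1 p"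
  have p0: "0 < p" using p by simp
  have bdd: "bdd_above ?Rs" by (rule bdd_above_R_radii[OF hJ U T p0 lam(2)])
  have c1: "1 \<le> ?c" by (rule id_to_l1_norm_ge_1[OF N])
  have "Sup (AP_means J U lam (unit_ball_N N) p) \<le> ?c * Sup ?Rs / ?n powr (1 / p)"
  proof (rule cSup_least)
    show "AP_means J U lam (unit_ball_N N) p \<noteq> {}"
      using zero_in_AP_means[OF U lam p0 zero_in_unit_ball_N[OF N(1)]] by auto
    fix y assume "y \<in> AP_means J U lam (unit_ball_N N) p"
    then obtain r :: "real ^ 'n" where r: "y = (\<Sum>i\<in>UNIV. r $ i) / ?n"
      "\<forall>i. 0 \<le> r $ i" "AP_admissible J U lam (unit_ball_N N) p r" unfolding AP_means_def by blast
    define \<rho> where "\<rho> = ?n powr (1 / p) * y / ?c"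
    have "R_admissible J U lam unit_disc1 p \<rho>"
      by (rule R_admissible_of_AP_admissible[OF hJ U N p lam(2) r(2,3)]) (simp add: \<rho>_def r(1))
    moreover have "0 \<le> \<rho>" unfolding \<rho>_def r(1) using r(2) c1 by (simp add: sum_nonneg)
    ultimately have "\<rho> \<le> Sup ?Rs" using bdd unfolding R_radii_def by (intro cSup_upper) auto
    then have "?n powr (1 / p) * y \<le> ?c * Sup ?Rs" unfolding \<rho>_def using c1 by (simp add: field_simps)
    then show "y \<le> ?c * Sup ?Rs / ?n powr (1 / p)" by (simp add: field_simps)
  qed
  then show ?thesis unfolding Rlam_eq APlam_eq .
qed

theorem mainTheorem13:
  fixes J :: "'h::{real_inner,complete_space} \<Rightarrow>\<^sub>L 'h"
    and Jy :: "'y::banach \<Rightarrow> 'y"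
    and U :: "('h \<Rightarrow>\<^sub>L 'h) \<Rightarrow> 'y"
    and N :: "complex ^ 'n::finite \<Rightarrow> real"
    and p lam :: real
  assumes "hilbert_cstruct J"
    and "banach_cstruct Jy"
    and "bounded_clinear_U J Jy U"
    and "\<exists>T\<in>Bop J. U T \<noteq> 0"
    and "opnorm_U J U < lam"
    and "1 \<le> p"
    and "is_cnorm N"
    and "normalized_1_unconditional N"
  shows "Rlam J U lam unit_disc1 p / real CARD('n) \<le> APlam J U lam (unit_ball_N N) p
       \<and> APlam J U lam (unit_ball_N N) p
           \<le> id_to_l1_norm N * Rlam J U lam unit_disc1 p / real CARD('n) powr (1 / p)"
proof
  obtain T where T: "T \<in> Bop J" "U T \<noteq> 0" using assms(4) by blast
  have lam: "opnorm_U J U \<le> lam" "0 \<le> lam"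
    using opnorm_U_pos[OF assms(3) T] assms(5) by auto
  have "Rlam J U lam unit_disc1 p \<le> real CARD('n) * APlam J U lam (unit_ball_N N) p"
    by (rule Rlam_le_card_mult_APlam[OF assms(1,3) T lam assms(6-8)])
  then show "Rlam J U lam unit_disc1 p / real CARD('n) \<le> APlam J U lam (unit_ball_N N) p"
    by (simp add: divide_le_eq mult.commute)
  show "APlam J U lam (unit_ball_N N) p
      \<le> id_to_l1_norm N * Rlam J U lam unit_disc1 p / real CARD('n) powr (1 / p)"
    by (rule APlam_le_id_to_l1_norm_mult_Rlam[OF assms(1,3) T lam assms(6-8)])
qed

end
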